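(* Let $0<\delta<1$, let $\omega_0$ be the Cao soliton on $\mathbb{C}^n$ with Laplace–Beltrami operator $\Delta$, $X=-2r\partial_r=-4\partial_t$, and $w=e^{\delta\varphi}$. (1) For every $t_0\in\mathbb{R}$ and every $C^2$ function $u$ on $\{t\le t_0\}\subseteq\mathbb{C}^n$, \[ \sup_{t\le t_0}w|u|\le\max\left[\sup_{t=t_0}w|u|,\ \frac1{4\delta(1-\delta)n}\sup_{t\le t_0}w|(\Delta-X)u|\right]. \] (2) For every $r_0\in[1,\infty]$ and every $u$ on $\{1\le r\le r_0\}$ such that $u|_{\{r=r_0\}}=0$ if $r_0<\infty$, or $u\in C^2_\delta(\{1\le r\})$ if $r_0=\infty$, \[ \sup_{1\le r\le r_0}w|u|\le\max\left[\sup_{r=1}w|u|,\ \frac1{4\delta(1-\delta)n}\sup_{1\le r\le r_0}w|(\Delta-X)u|\right]. \]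
   Context: On $\mathbb{C}^n$, $r=|z|$, $t=\log r^2$. $F(s)=\sum_{j=0}^{n-1}(-1)^{n-j-1}\frac{(n-1)!}{j!}s^j$, $\varphi$ defined by $F(\varphi(t))e^{\varphi(t)}=\frac{e^{nt}}n+F(0)$; it satisfies $\varphi^{n-1}\varphi_te^{\varphi}=e^{nt}$ and $0<\varphi_t<n$. The Cao soliton is $\omega_0=\tfrac i2\partial\overline{\partial}\Phi_0$ with $\partial_t\Phi_0=\varphi$ (smooth Kähler on $\mathbb{C}^n$). $\Delta$ is the trace of the Hessian (so on radial functions $\Delta f=\frac{4}{\varphi^{n-1}\varphi_t}\partial_t(\varphi^{n-1}\partial_tf)$). $C^2_\delta$ is the space of $C^2$ functions $u$ with $e^{\delta\varphi}u$ bounded in $C^2$ with respect to $\omega_0$. *)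

theory Defs
  imports "HOL-Analysis.Analysis"
begin

text \<open>Setting: C^n is modelled as complex^'n, with n = CARD('n).
  Real-valued functions u :: complex^'n => real; derivatives are real Frechet derivatives.\<close>

definition Fpol :: "nat \<Rightarrow> real \<Rightarrow> real" where
  "Fpol n s = (\<Sum>j<n. (-1) ^ (n - j - 1) * (fact (n - 1) / fact j) * s ^ j)"

definition phi :: "nat \<Rightarrow> real \<Rightarrow> real" where
  "phi n t = (THE s. 0 < s \<and> Fpol n s * exp s = exp (real n * t) / real n + Fpol n 0)"

text \<open>phi as a function on C^n, t = log |z|^2; at the origin t = -infinity and phi = 0.\<close>
definition phiz :: "complex^'n::finite \<Rightarrow> real" where
  "phiz z = (if z = 0 then 0 else phi CARD('n) (ln ((norm z)\<^sup>2)))"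

text \<open>Kaehler potential of the Cao soliton: d Phi0 / dt = phi, i.e.
  Phi0(z) = integral_0^{|z|^2} phi(log s)/s ds.\<close>
definition Phi0 :: "complex^'n::finite \<Rightarrow> real" where
  "Phi0 z = integral {0..(norm z)\<^sup>2} (\<lambda>s. phi CARD('n) (ln s) / s)"

definition wgt :: "real \<Rightarrow> complex^'n::finite \<Rightarrow> real" where
  "wgt \<delta> z = exp (\<delta> * phiz z)"

definition D2 :: "(complex^'n::finite \<Rightarrow> real) \<Rightarrow> complex^'n \<Rightarrow> complex^'n \<Rightarrow> complex^'n \<Rightarrow> real" where
  "D2 u x v w = frechet_derivative (\<lambda>y. frechet_derivative u (at y) v) (at x) w"

text \<open>u is C^2 on S (S possibly closed): it is C^2 on some open set containing S.\<close>
definition C2_on :: "(complex^'n::finite) set \<Rightarrow> (complex^'n \<Rightarrow> real) \<Rightarrow> bool" where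
  "C2_on S u \<longleftrightarrow> (\<exists>U. open U \<and> S \<subseteq> U \<and>
      (\<forall>x\<in>U. u differentiable (at x)) \<and>
      (\<forall>v. \<forall>x\<in>U. (\<lambda>y. frechet_derivative u (at y) v) differentiable (at x)) \<and>
      (\<forall>v w. continuous_on U (\<lambda>x. D2 u x v w)))"

text \<open>Complex Hessian entry d_i d_{bar j} u.\<close>
definition hessC :: "(complex^'n::finite \<Rightarrow> real) \<Rightarrow> complex^'n \<Rightarrow> complex^'n^'n" where
  "hessC u z = (\<chi> i j.
      complex_of_real ((D2 u z (axis i 1) (axis j 1) + D2 u z (axis i \<i>) (axis j \<i>)) / 4)
      + \<i> * complex_of_real ((D2 u z (axis i 1) (axis j \<i>) - D2 u z (axis i \<i>) (axis j 1)) / 4))"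

text \<open>Metric coefficients g_{i bar j} of omega_0 = (i/2) dd^c Phi0.\<close>
definition gmat :: "complex^'n::finite \<Rightarrow> complex^'n^'n" where
  "gmat z = hessC Phi0 z"

definition lap :: "(complex^'n::finite \<Rightarrow> real) \<Rightarrow> complex^'n \<Rightarrow> real" where
  "lap u z = 4 * Re (trace (matrix_inv (gmat z) ** hessC u z))"

definition Xop :: "(complex^'n::finite \<Rightarrow> real) \<Rightarrow> complex^'n \<Rightarrow> real" where
  "Xop u z = -2 * frechet_derivative u (at z) z"

definition gR :: "complex^'n::finite \<Rightarrow> complex^'n \<Rightarrow> complex^'n \<Rightarrow> real" where
  "gR z a b = Re (\<Sum>j\<in>UNIV. \<Sum>k\<in>UNIV. gmat z $ j $ k * a $ j * cnj (b $ k))"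

text \<open>Christoffel symbols of the Levi-Civita connection (for constant vector fields a, b).\<close>
definition Gam :: "complex^'n::finite \<Rightarrow> complex^'n \<Rightarrow> complex^'n \<Rightarrow> complex^'n" where
  "Gam z a b = (THE e. \<forall>c. gR z e c =
      (frechet_derivative (\<lambda>y. gR y b c) (at z) a + frechet_derivative (\<lambda>y. gR y a c) (at z) b
       - frechet_derivative (\<lambda>y. gR y a b) (at z) c) / 2)"

definition covHess :: "(complex^'n::finite \<Rightarrow> real) \<Rightarrow> complex^'n \<Rightarrow> complex^'n \<Rightarrow> complex^'n \<Rightarrow> real" where
  "covHess v z a b = D2 v z a b - frechet_derivative v (at z) (Gam z a b)"

definition C2_bounded :: "(complex^'n::finite) set \<Rightarrow> (complex^'n \<Rightarrow> real) \<Rightarrow> bool" where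
  "C2_bounded S v \<longleftrightarrow> (\<exists>M. \<forall>z\<in>S.
      \<bar>v z\<bar> \<le> M \<and>
      (\<forall>a. \<bar>frechet_derivative v (at z) a\<bar> \<le> M * sqrt (gR z a a)) \<and>
      (\<forall>a b. \<bar>covHess v z a b\<bar> \<le> M * sqrt (gR z a a) * sqrt (gR z b b)))"

definition C2_delta :: "real \<Rightarrow> (complex^'n::finite) set \<Rightarrow> (complex^'n \<Rightarrow> real) \<Rightarrow> bool" where
  "C2_delta \<delta> S u \<longleftrightarrow> C2_on S u \<and> C2_bounded S (\<lambda>z. wgt \<delta> z * u z)"

definition esup :: "'a set \<Rightarrow> ('a \<Rightarrow> real) \<Rightarrow> ereal" where
  "esup A f = (SUP z\<in>A. ereal (f z))"

end

theory Submission
  imports Defs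
begin

text \<open>
  On functions of \<open>t = log |z|\<^sup>2\<close> alone, \<open>\<Delta> - X\<close> acts as
  \<open>4 f\<^sub>t\<^sub>t / \<phi>\<^sub>t + 4 (n - 1) f\<^sub>t / \<phi> + 4 f\<^sub>t\<close>; on \<open>e\<^sup>-\<^sup>k\<^sup>\<phi>\<close> this gives
  \<open>-4k e\<^sup>-\<^sup>k\<^sup>\<phi> (n - k \<phi>\<^sub>t) \<le> -4k(1 - k) n e\<^sup>-\<^sup>k\<^sup>\<phi>\<close>, because \<open>0 < \<phi>\<^sub>t \<le> n\<close>.
  Since also \<open>\<phi>\<^sub>t \<le> \<phi>\<close>, the inverse metric is positive, so at an interior maximum of
  \<open>u - \<psi>\<close> one has \<open>(\<Delta> - X) u \<le> (\<Delta> - X) \<psi>\<close>. Comparing \<open>u\<close> with the barrier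
  \<open>M e\<^sup>-\<^sup>\<delta>\<^sup>\<phi> + \<epsilon> g\<close>, where \<open>M = max (sup\<^sub>\<partial> w |u|) (sup w |(\<Delta> - X) u| / (4\<delta>(1 - \<delta>) n))\<close>
  and \<open>g\<close> is a strict supersolution, and letting \<open>\<epsilon> \<rightarrow> 0\<close> gives \<open>w u \<le> M\<close>; the same
  applies to \<open>-u\<close>. On bounded regions \<open>g = t\<^sub>0 - t\<close>, which near the origin also swamps
  \<open>sup u\<close> on a small inner circle; on the exterior domain \<open>g = e\<^sup>-\<^sup>\<delta>\<^sup>\<phi>\<^sup>/\<^sup>2\<close>, which
  eventually dominates \<open>e\<^sup>-\<^sup>\<delta>\<^sup>\<phi>\<close> times the bound on \<open>w u\<close> for \<open>u \<in> C\<^sup>2\<^sub>\<delta>\<close>.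
\<close>

section \<open>The function \<open>\<phi>\<close>\<close>

lemma Fpol_Suc: "Fpol (Suc n) s = s ^ n - real n * Fpol n s"
proof -
  have "(\<Sum>j<n. (-1) ^ (n - j) * (fact n / fact j) * s ^ j) = - real n * Fpol n s"
    unfolding Fpol_def sum_distrib_left
  proof (rule sum.cong[OF refl])
    fix j assume "j \<in> {..<n}"
    then have "n - j = Suc (n - j - 1)" and "(fact n :: real) = real n * fact (n - 1)"
      by (auto simp: fact_reduce)
    then show "(-1) ^ (n - j) * (fact n / fact j) * s ^ j
             = - real n * ((-1) ^ (n - j - 1) * (fact (n - 1) / fact j) * s ^ j)"
      by (simp add: field_simps)
  qed
  then show ?thesis
    by (simp add: Fpol_def)
qed

lemma Fpol_has_real_derivative:
  "n \<ge> 1 \<Longrightarrow> (Fpol n has_real_derivative (s ^ (n - 1) - Fpol n s)) (at s)"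
proof (induction n rule: nat_induct_at_least)
  case base
  have "Fpol 1 = (\<lambda>s. 1)"
    by (auto simp: Fpol_def)
  then show ?case
    by simp
next
  case (Suc n)
  have "((\<lambda>s. s ^ n - real n * Fpol n s) has_real_derivative
        real n * s ^ (n - 1) - real n * (s ^ (n - 1) - Fpol n s)) (at s)"
    by (auto intro!: derivative_eq_intros Suc.IH)
  then show ?case
    by (simp add: Fpol_Suc[abs_def] Fpol_Suc algebra_simps)
qed

definition Fexp :: "nat \<Rightarrow> real \<Rightarrow> real" where
  "Fexp n s = Fpol n s * exp s"

lemma Fexp_has_real_derivative:
  assumes "n \<ge> 1"
  shows "(Fexp n has_real_derivative s ^ (n - 1) * exp s) (at s)"
proof -
  have "(Fexp n has_real_derivative (s ^ (n - 1) - Fpol n s) * exp s + exp s * Fpol n s) (at s)"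
    unfolding Fexp_def[abs_def] by (rule DERIV_mult[OF Fpol_has_real_derivative[OF assms] DERIV_exp])
  then show ?thesis
    by (simp add: algebra_simps)
qed

lemma Fexp_strict_mono:
  assumes n: "n \<ge> 1" and "0 \<le> a" "a < b"
  shows "Fexp n a < Fexp n b"
proof (rule DERIV_pos_imp_increasing_open[OF \<open>a < b\<close>])
  show "\<exists>y. (Fexp n has_real_derivative y) (at x) \<and> 0 < y" if "a < x" "x < b" for x
    using that assms Fexp_has_real_derivative[OF n, of x] by force
  show "continuous_on {a..b} (Fexp n)"
    by (meson DERIV_isCont Fexp_has_real_derivative continuous_at_imp_continuous_on n)
qed

lemma Fexp_increment_ge:
  assumes n: "n \<ge> 1" and s: "0 \<le> s"
  shows "s ^ n / real n \<le> Fexp n s - Fexp n 0"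
proof -
  let ?f = "\<lambda>s. Fexp n s - Fexp n 0 - s ^ n / real n"
  have "(?f has_real_derivative x ^ (n - 1) * exp x - x ^ (n - 1)) (at x)" for x
    using n by (auto intro!: derivative_eq_intros Fexp_has_real_derivative)
  moreover have "x ^ (n - 1) * exp x - x ^ (n - 1) \<ge> 0" if "0 \<le> x" for x :: real
    using mult_left_mono[of 1 "exp x" "x ^ (n - 1)"] that by (simp add: less_imp_le)
  ultimately have "?f 0 \<le> ?f s"
    by (intro deriv_nonneg_imp_mono[OF _ _ s]) auto
  then show ?thesis
    using n by (simp add: power_0_left)
qed

lemma Fexp_increment_le:
  assumes n: "n \<ge> 1" and s: "0 \<le> s"
  shows "real n * (Fexp n s - Fexp n 0) \<le> s ^ n * exp s"
proof -
  let ?f = "\<lambda>s. s ^ n * exp s - real n * (Fexp n s - Fexp n 0)"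
  have "(?f has_real_derivative x ^ n * exp x) (at x)" for x
    by (rule derivative_eq_intros refl Fexp_has_real_derivative[OF n] | simp add: algebra_simps)+
  then have "?f 0 \<le> ?f s"
    by (intro deriv_nonneg_imp_mono[OF _ _ s]) auto
  then show ?thesis
    using n by (simp add: power_0_left)
qed

lemma Fexp_increment_le':
  assumes n: "n \<ge> 1" and s: "0 \<le> s"
  shows "Fexp n s - Fexp n 0 \<le> s ^ (n - 1) * (exp s - 1)"
proof -
  let ?f = "\<lambda>s. s ^ (n - 1) * (exp s - 1) - (Fexp n s - Fexp n 0)"
  have "(?f has_real_derivative real (n - 1) * x ^ (n - 1 - 1) * (exp x - 1)) (at x)" for x
    by (rule derivative_eq_intros refl Fexp_has_real_derivative[OF n] | simp add: algebra_simps)+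
  then have "?f 0 \<le> ?f s"
    by (intro deriv_nonneg_imp_mono[OF _ _ s]) auto
  then show ?thesis
    by simp
qed

lemma phi_equation_ex1:
  assumes n: "n \<ge> 1"
  shows "\<exists>!s. 0 < s \<and> Fpol n s * exp s = exp (real n * t) / real n + Fpol n 0"
proof -
  let ?y = "exp (real n * t) / real n + Fexp n 0"
  define S where "S = max 1 (exp (real n * t))"
  have S1: "S \<ge> 1"
    by (simp add: S_def)
  have "S / real n \<le> S ^ n / real n"
    using S1 n by (intro divide_right_mono) (auto intro: order_trans[OF _ power_increasing[of 1 n S]])
  moreover have "exp (real n * t) / real n \<le> S / real n"
    by (auto simp: S_def divide_right_mono)
  ultimately have "?y \<le> Fexp n S"
    using Fexp_increment_ge[OF n, of S] S1 by linarith
  moreover have "continuous_on {0..S} (Fexp n)"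
    by (meson DERIV_isCont Fexp_has_real_derivative continuous_at_imp_continuous_on n)
  ultimately obtain x where x: "0 \<le> x" "Fexp n x = ?y"
    using IVT'[of "Fexp n" 0 ?y S] S1 by auto
  with n have "0 < x"
    by (cases "x = 0") auto
  show ?thesis
  proof (rule ex1I[of _ x])
    show "0 < x \<and> Fpol n x * exp x = exp (real n * t) / real n + Fpol n 0"
      using \<open>0 < x\<close> x(2) by (simp add: Fexp_def)
  next
    fix y assume y: "0 < y \<and> Fpol n y * exp y = exp (real n * t) / real n + Fpol n 0"
    then have "Fexp n y = Fexp n x"
      using x(2) by (simp add: Fexp_def)
    then show "y = x"
      using Fexp_strict_mono[OF n, of x y] Fexp_strict_mono[OF n, of y x] \<open>0 < x\<close> y
      by (cases x y rule: linorder_cases) auto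
  qed
qed

lemma
  assumes "n \<ge> 1"
  shows phi_pos: "0 < phi n t"
    and Fexp_phi: "Fexp n (phi n t) - Fexp n 0 = exp (real n * t) / real n"
  using theI'[OF phi_equation_ex1[OF assms, of t]] by (auto simp: phi_def Fexp_def)

lemma phi_eqI:
  assumes n: "n \<ge> 1" and "0 < s" "Fexp n s - Fexp n 0 = exp (real n * t) / real n"
  shows "phi n t = s"
  unfolding phi_def using phi_equation_ex1[OF n] assms(2,3)
  by (intro the1_equality) (auto simp: Fexp_def)

definition phi_inv :: "nat \<Rightarrow> real \<Rightarrow> real" where
  "phi_inv n s = ln (real n * (Fexp n s - Fexp n 0)) / real n"

lemma phi_phi_inv:
  assumes n: "n \<ge> 1" and s: "0 < s"
  shows "phi n (phi_inv n s) = s"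
proof (rule phi_eqI[OF n s])
  have "real n * (Fexp n s - Fexp n 0) > 0"
    using Fexp_strict_mono[OF n order_refl s] n by simp
  then show "Fexp n s - Fexp n 0 = exp (real n * phi_inv n s) / real n"
    using n by (simp add: phi_inv_def)
qed

lemma phi_inv_phi: "n \<ge> 1 \<Longrightarrow> phi_inv n (phi n t) = t"
  by (simp add: phi_inv_def Fexp_phi)

lemma phi_inv_has_real_derivative:
  assumes n: "n \<ge> 1" and s: "0 < s"
  shows "(phi_inv n has_real_derivative s ^ (n - 1) * exp s / (real n * (Fexp n s - Fexp n 0))) (at s)"
proof -
  have pos: "real n * (Fexp n s - Fexp n 0) > 0"
    using Fexp_strict_mono[OF n order_refl s] n by simp
  have "((\<lambda>s. real n * (Fexp n s - Fexp n 0)) has_real_derivative real n * (s ^ (n - 1) * exp s - 0)) (at s)"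
    by (intro DERIV_cmult DERIV_diff Fexp_has_real_derivative[OF n] DERIV_const)
  from DERIV_cdivide[OF DERIV_chain2[OF DERIV_ln_divide[OF pos] this], of "real n"]
  have "((\<lambda>s. ln (real n * (Fexp n s - Fexp n 0)) / real n) has_real_derivative
      1 / (real n * (Fexp n s - Fexp n 0)) * (real n * (s ^ (n - 1) * exp s - 0)) / real n) (at s)" .
  moreover have "1 / (real n * (Fexp n s - Fexp n 0)) * (real n * (s ^ (n - 1) * exp s - 0)) / real n
      = s ^ (n - 1) * exp s / (real n * (Fexp n s - Fexp n 0))"
    using n pos by (simp add: field_simps)
  ultimately show ?thesis
    unfolding phi_inv_def[abs_def] by simp
qed

lemma isCont_phi:
  assumes n: "n \<ge> 1"
  shows "isCont (phi n) t"
proof -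
  let ?x = "phi n t"
  have x: "?x > 0"
    using phi_pos[OF n] .
  have "isCont (phi n) (phi_inv n ?x)"
    by (rule isCont_inverse_function2[of "?x / 2" ?x "?x + 1"])
      (use x n in \<open>auto intro: phi_phi_inv DERIV_isCont[OF phi_inv_has_real_derivative]\<close>)
  then show ?thesis
    using phi_inv_phi[OF n] by simp
qed

text \<open>\<open>phi_t\<close> is \<open>\<phi>\<^sub>t\<close>, written via the ODE \<open>\<phi>\<^sup>n\<^sup>-\<^sup>1 \<phi>\<^sub>t e\<^sup>\<phi> = e\<^sup>n\<^sup>t\<close>.\<close>
definition phi_t :: "nat \<Rightarrow> real \<Rightarrow> real" where
  "phi_t n t = exp (real n * t) / (phi n t ^ (n - 1) * exp (phi n t))"

lemma phi_has_real_derivative: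
  assumes n: "n \<ge> 1"
  shows "(phi n has_real_derivative phi_t n t) (at t)"
proof -
  let ?x = "phi n t"
  have x: "?x > 0"
    using phi_pos[OF n] .
  have e: "real n * (Fexp n ?x - Fexp n 0) = exp (real n * t)"
    using Fexp_phi[OF n, of t] n by simp
  have "(phi n has_real_derivative
      inverse (?x ^ (n - 1) * exp ?x / (real n * (Fexp n ?x - Fexp n 0)))) (at t)"
  proof (rule DERIV_inverse_function[where f = "phi_inv n" and a = "t - 1" and b = "t + 1"])
    show "(phi_inv n has_real_derivative ?x ^ (n - 1) * exp ?x / (real n * (Fexp n ?x - Fexp n 0))) (at ?x)"
      by (rule phi_inv_has_real_derivative[OF n x])
    show "?x ^ (n - 1) * exp ?x / (real n * (Fexp n ?x - Fexp n 0)) \<noteq> 0"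
      using Fexp_strict_mono[OF n order_refl x] x n by simp
  qed (use n in \<open>auto intro: isCont_phi simp: phi_inv_phi\<close>)
  then show ?thesis
    unfolding e phi_t_def by (simp add: field_simps)
qed

lemma phi_t_pos: "n \<ge> 1 \<Longrightarrow> 0 < phi_t n t"
  using phi_pos by (simp add: phi_t_def)

lemma phi_t_le_phi:
  assumes n: "n \<ge> 1"
  shows "phi_t n t \<le> phi n t"
proof -
  let ?x = "phi n t"
  have "exp (real n * t) \<le> ?x ^ n * exp ?x"
    using Fexp_increment_le[OF n, of ?x] phi_pos[OF n, of t] Fexp_phi[OF n, of t] n by simp
  also have "\<dots> = ?x * (?x ^ (n - 1) * exp ?x)"
    using n by (cases n) auto
  finally show ?thesis
    using phi_pos[OF n, of t] unfolding phi_t_def by (simp add: divide_le_eq)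
qed

lemma phi_t_le_n:
  assumes n: "n \<ge> 1"
  shows "phi_t n t \<le> real n"
proof -
  let ?x = "phi n t"
  have "Fexp n ?x - Fexp n 0 \<le> ?x ^ (n - 1) * exp ?x - ?x ^ (n - 1)"
    using Fexp_increment_le'[OF n, of ?x] phi_pos[OF n, of t] by (simp add: right_diff_distrib)
  then have "Fexp n ?x - Fexp n 0 \<le> ?x ^ (n - 1) * exp ?x"
    using phi_pos[OF n, of t] by (smt (verit) zero_le_power)
  then have "exp (real n * t) \<le> real n * (?x ^ (n - 1) * exp ?x)"
    using Fexp_phi[OF n, of t] n by (simp add: field_simps)
  then show ?thesis
    using phi_pos[OF n, of t] unfolding phi_t_def by (simp add: divide_le_eq)
qed

lemma phi_le_exp:
  assumes n: "n \<ge> 1"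
  shows "phi n t \<le> exp t"
proof -
  have "phi n t ^ n / real n \<le> exp (real n * t) / real n"
    using Fexp_increment_ge[OF n, of "phi n t"] Fexp_phi[OF n, of t] phi_pos[OF n, of t] by simp
  then have "phi n t ^ Suc (n - 1) \<le> exp t ^ Suc (n - 1)"
    using n by (simp add: divide_le_cancel exp_of_nat_mult)
  then show ?thesis
    by (rule power_le_imp_le_base) simp
qed

lemma phi_ge:
  assumes n: "n \<ge> 1" and C: "0 < C" and t: "ln (C ^ n * exp C) / real n \<le> t"
  shows "C \<le> phi n t"
proof (rule ccontr)
  let ?x = "phi n t"
  assume "\<not> C \<le> ?x"
  have "exp (real n * t) \<le> ?x ^ n * exp ?x"
    using Fexp_increment_le[OF n, of ?x] phi_pos[OF n, of t] Fexp_phi[OF n, of t] n by simp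
  also have "\<dots> < C ^ n * exp C"
    using \<open>\<not> C \<le> ?x\<close> phi_pos[OF n, of t] n by (intro mult_strict_mono power_strict_mono) auto
  finally have "ln (exp (real n * t)) < ln (C ^ n * exp C)"
    using C by (subst ln_less_cancel_iff) auto
  then show False
    using t n by (simp add: divide_le_eq mult.commute)
qed

definition phi_tt :: "nat \<Rightarrow> real \<Rightarrow> real" where
  "phi_tt n t = phi_t n t * (real n - phi_t n t - (real n - 1) * (phi_t n t / phi n t))"

lemma phi_t_has_real_derivative:
  assumes n: "n \<ge> 1"
  shows "(phi_t n has_real_derivative phi_tt n t) (at t)"
proof -
  have exp_form: "phi_t n t = exp (real n * t - phi n t - (real n - 1) * ln (phi n t))" for t
  proof -
    have "exp ((real n - 1) * ln (phi n t)) = phi n t powr real (n - 1)"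
      using phi_pos[OF n, of t] n by (simp add: powr_def of_nat_diff)
    also have "\<dots> = phi n t ^ (n - 1)"
      using phi_pos[OF n, of t] by (simp add: powr_realpow)
    finally show ?thesis
      by (simp add: phi_t_def exp_diff)
  qed
  have ln_phi: "((\<lambda>t. ln (phi n t)) has_real_derivative 1 / phi n t * phi_t n t) (at t)"
    by (rule DERIV_chain2[where f = ln and g = "phi n", OF DERIV_ln_divide[OF phi_pos[OF n]]
          phi_has_real_derivative[OF n]])
  have "((\<lambda>t. real n * t - phi n t - (real n - 1) * ln (phi n t)) has_real_derivative
      real n * 1 - phi_t n t - (real n - 1) * (1 / phi n t * phi_t n t)) (at t)"
    by (rule DERIV_diff DERIV_cmult DERIV_ident phi_has_real_derivative[OF n] ln_phi)+
  from DERIV_chain2[where f = exp, OF DERIV_exp this]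
  have "((\<lambda>t. exp (real n * t - phi n t - (real n - 1) * ln (phi n t))) has_real_derivative
      exp (real n * t - phi n t - (real n - 1) * ln (phi n t))
        * (real n - phi_t n t - (real n - 1) * (phi_t n t / phi n t))) (at t)"
    by simp
  moreover have "phi_t n = (\<lambda>t. exp (real n * t - phi n t - (real n - 1) * ln (phi n t)))"
    using exp_form by blast
  ultimately show ?thesis
    unfolding phi_tt_def by simp
qed

section \<open>Derivatives of radial functions\<close>

lemma DERIV_comp_ln:
  assumes "\<And>t. (h has_real_derivative h1 t) (at t)" and "0 < s"
  shows "((\<lambda>s. h (ln s)) has_real_derivative h1 (ln s) / s) (at s)"
  using DERIV_chain2[OF assms(1) DERIV_ln_divide[OF assms(2)]] by simp

lemma DERIV_comp_ln_divide:
  assumes "\<And>t. (h has_real_derivative h1 t) (at t)" and s: "0 < s"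
  shows "((\<lambda>s. h (ln s) / s) has_real_derivative (h1 (ln s) - h (ln s)) / s\<^sup>2) (at s)"
proof -
  have "((\<lambda>s. h (ln s) / s) has_real_derivative (h1 (ln s) / s * s - h (ln s) * 1) / (s * s)) (at s)"
    using s by (intro DERIV_divide DERIV_comp_ln[OF assms(1)] DERIV_ident) auto
  then show ?thesis
    using s by (simp add: field_simps power2_eq_square)
qed

lemma has_derivative_radial:
  fixes y :: "'a::real_inner"
  assumes dH: "\<And>s. 0 < s \<Longrightarrow> (H has_real_derivative H1 s) (at s)" and "y \<noteq> 0"
  shows "((\<lambda>y. H (y \<bullet> y)) has_derivative (\<lambda>v. 2 * H1 (y \<bullet> y) * (y \<bullet> v))) (at y)"
proof -
  have "0 < y \<bullet> y"
    using assms(2) by simp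
  moreover have "((\<lambda>y. y \<bullet> y) has_derivative (\<lambda>v. y \<bullet> v + v \<bullet> y)) (at y)"
    by (auto intro!: derivative_eq_intros)
  ultimately have "((\<lambda>y. H (y \<bullet> y)) has_derivative (\<lambda>v. (y \<bullet> v + v \<bullet> y) * H1 (y \<bullet> y))) (at y)"
    by (rule DERIV_compose_FDERIV[OF dH])
  then show ?thesis
    by (rule has_derivative_eq_rhs) (auto simp: inner_commute algebra_simps)
qed

lemma frechet_derivative_radial:
  fixes y :: "'a::real_inner"
  assumes "\<And>s. 0 < s \<Longrightarrow> (H has_real_derivative H1 s) (at s)" and "y \<noteq> 0"
  shows "frechet_derivative (\<lambda>y. H (y \<bullet> y)) (at y) = (\<lambda>v. 2 * H1 (y \<bullet> y) * (y \<bullet> v))"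
  using frechet_derivative_at[OF has_derivative_radial[OF assms]] by simp

lemma has_derivative_frechet_derivative_radial:
  fixes z :: "'a::real_inner"
  assumes dH: "\<And>s. 0 < s \<Longrightarrow> (H has_real_derivative H1 s) (at s)"
    and dH1: "\<And>s. 0 < s \<Longrightarrow> (H1 has_real_derivative H2 s) (at s)" and z: "z \<noteq> 0"
  shows "((\<lambda>y. frechet_derivative (\<lambda>y. H (y \<bullet> y)) (at y) v) has_derivative
          (\<lambda>w. 4 * H2 (z \<bullet> z) * (z \<bullet> v) * (z \<bullet> w) + 2 * H1 (z \<bullet> z) * (v \<bullet> w))) (at z)"
proof -
  have "((\<lambda>y. 2 * H1 (y \<bullet> y)) has_derivative (\<lambda>w. 2 * (2 * H2 (z \<bullet> z) * (z \<bullet> w)))) (at z)"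
    by (intro has_derivative_mult_right has_derivative_radial[OF dH1 z])
  from has_derivative_mult[OF this has_derivative_inner_left[OF has_derivative_ident]]
  have "((\<lambda>y. 2 * H1 (y \<bullet> y) * (y \<bullet> v)) has_derivative
      (\<lambda>w. 2 * H1 (z \<bullet> z) * (w \<bullet> v) + 2 * (2 * H2 (z \<bullet> z) * (z \<bullet> w)) * (z \<bullet> v))) (at z)" .
  then have "((\<lambda>y. 2 * H1 (y \<bullet> y) * (y \<bullet> v)) has_derivative
      (\<lambda>w. 4 * H2 (z \<bullet> z) * (z \<bullet> v) * (z \<bullet> w) + 2 * H1 (z \<bullet> z) * (v \<bullet> w))) (at z)"
    by (rule has_derivative_eq_rhs) (auto simp: inner_commute algebra_simps)
  then show ?thesis
    by (rule has_derivative_transform_within_open[where s = "- {0}"])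
      (use z in \<open>auto simp: frechet_derivative_radial[OF dH]\<close>)
qed

lemma D2_radial:
  fixes z :: "complex^'n::finite"
  assumes dH: "\<And>s. 0 < s \<Longrightarrow> (H has_real_derivative H1 s) (at s)"
    and dH1: "\<And>s. 0 < s \<Longrightarrow> (H1 has_real_derivative H2 s) (at s)" and z: "z \<noteq> 0"
  shows "D2 (\<lambda>y. H (y \<bullet> y)) z v w = 4 * H2 (z \<bullet> z) * (z \<bullet> v) * (z \<bullet> w) + 2 * H1 (z \<bullet> z) * (v \<bullet> w)"
  unfolding D2_def
  using frechet_derivative_at[OF has_derivative_frechet_derivative_radial[OF dH dH1 z, of v], symmetric]
  by simp

definition diag_plus_rank1 :: "complex \<Rightarrow> complex \<Rightarrow> complex^'n::finite \<Rightarrow> complex^'n^'n" where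
  "diag_plus_rank1 a b z = (\<chi> i j. a * (if i = j then 1 else 0) + b * cnj (z $ i) * z $ j)"

lemma hessC_radial:
  fixes z :: "complex^'n::finite"
  assumes dH: "\<And>s. 0 < s \<Longrightarrow> (H has_real_derivative H1 s) (at s)"
    and dH1: "\<And>s. 0 < s \<Longrightarrow> (H1 has_real_derivative H2 s) (at s)" and z: "z \<noteq> 0"
  shows "hessC (\<lambda>y. H (y \<bullet> y)) z = diag_plus_rank1 (of_real (H1 (z \<bullet> z))) (of_real (H2 (z \<bullet> z))) z"
proof -
  have "axis i x $ j = 0" if "i \<noteq> j" for i j :: 'n and x :: complex
    using that by (simp add: axis_def)
  then show ?thesis
    unfolding hessC_def diag_plus_rank1_def
    by (auto simp: D2_radial[OF dH dH1 z] vec_eq_iff complex_eq_iff inner_axis inner_axis_axis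
        inner_complex_def algebra_simps diff_divide_distrib add_divide_distrib)
qed

section \<open>The Laplacian of the Cao soliton\<close>

lemma phi_ln_divide_bounded:
  assumes n: "n \<ge> 1" and "0 \<le> \<sigma>"
  shows "\<bar>phi n (ln \<sigma>) / \<sigma>\<bar> \<le> 1"
proof (cases "\<sigma> = 0")
  case False
  then have "0 < \<sigma>"
    using assms by simp
  then show ?thesis
    using phi_le_exp[OF n, of "ln \<sigma>"] phi_pos[OF n, of "ln \<sigma>"] by (simp add: abs_le_iff divide_le_eq)
qed simp

text \<open>At \<open>\<sigma> = 0\<close> the integrand takes the junk value \<open>0\<close> and is discontinuous, so
  integrability comes from measurability and boundedness rather than continuity.\<close>
lemma phi_ln_divide_integrable:
  assumes n: "n \<ge> 1" and "0 \<le> a"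
  shows "(\<lambda>\<sigma>. phi n (ln \<sigma>) / \<sigma>) integrable_on {a..b}"
proof (rule measurable_bounded_by_integrable_imp_integrable_real[where g = "\<lambda>_. 1"])
  have "phi n \<in> borel_measurable borel"
    by (intro borel_measurable_continuous_onI continuous_at_imp_continuous_on ballI isCont_phi[OF n])
  then have "(\<lambda>\<sigma>. phi n (ln \<sigma>) / \<sigma>) \<in> borel_measurable borel"
    by measurable
  from measurable_comp[OF id_borel_measurable_lebesgue_on this]
  show "(\<lambda>\<sigma>. phi n (ln \<sigma>) / \<sigma>) \<in> borel_measurable (lebesgue_on {a..b})"
    by (simp add: o_def)
  show "\<bar>phi n (ln \<sigma>) / \<sigma>\<bar> \<le> 1" if "\<sigma> \<in> {a..b}" for \<sigma>
    using phi_ln_divide_bounded[OF n] that assms(2) by auto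
qed auto

definition Phi0_profile :: "nat \<Rightarrow> real \<Rightarrow> real" where
  "Phi0_profile n s = integral {0..s} (\<lambda>\<sigma>. phi n (ln \<sigma>) / \<sigma>)"

lemma Phi0_eq_profile: "(Phi0 :: complex^'n::finite \<Rightarrow> real) = (\<lambda>z. Phi0_profile CARD('n) (z \<bullet> z))"
  by (simp add: fun_eq_iff Phi0_def Phi0_profile_def power2_norm_eq_inner)

lemma Phi0_profile_has_real_derivative:
  assumes n: "n \<ge> 1" and s: "0 < s"
  shows "(Phi0_profile n has_real_derivative phi n (ln s) / s) (at s)"
proof -
  let ?f = "\<lambda>\<sigma>. phi n (ln \<sigma>) / \<sigma>"
  define c where "c = s / 2"
  have c: "0 < c" "c < s"
    using s by (auto simp: c_def)
  have "continuous_on {c..2 * s} ?f"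
    using c by (intro continuous_at_imp_continuous_on ballI
        DERIV_isCont[OF DERIV_comp_ln_divide[OF phi_has_real_derivative[OF n]]]) auto
  then have "((\<lambda>x. integral {c..x} ?f) has_real_derivative ?f s) (at s within {c..2 * s})"
    by (rule integral_has_real_derivative) (use c in auto)
  moreover have "s \<in> interior {c..2 * s}"
    using c s by (simp add: interior_atLeastAtMost_real)
  ultimately have "((\<lambda>x. integral {c..x} ?f) has_real_derivative ?f s) (at s)"
    by (metis at_within_interior)
  from DERIV_add[OF DERIV_const this]
  have "((\<lambda>x. integral {0..c} ?f + integral {c..x} ?f) has_real_derivative ?f s) (at s)"
    by simp
  then show ?thesis
  proof (rule has_field_derivative_transform_within_open[of _ _ _ "{c<..}"])
    show "integral {0..c} ?f + integral {c..x} ?f = Phi0_profile n x" if "x \<in> {c<..}" for x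
      unfolding Phi0_profile_def using that c
      by (intro Henstock_Kurzweil_Integration.integral_combine phi_ln_divide_integrable[OF n]) auto
  qed (use c in simp_all)
qed

lemma gmat_radial:
  fixes z :: "complex^'n::finite"
  assumes z: "z \<noteq> 0"
  defines "s \<equiv> z \<bullet> z" and "n \<equiv> CARD('n)"
  shows "gmat z = diag_plus_rank1 (of_real (phi n (ln s) / s))
                    (of_real ((phi_t n (ln s) - phi n (ln s)) / s\<^sup>2)) z"
  unfolding gmat_def Phi0_eq_profile s_def n_def
  by (rule hessC_radial[OF Phi0_profile_has_real_derivative
        DERIV_comp_ln_divide[OF phi_has_real_derivative] z]) (simp_all add: Suc_leI)

lemma diag_plus_rank1_mult:
  fixes z :: "complex^'n::finite"
  shows "diag_plus_rank1 a b z ** diag_plus_rank1 c d z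
       = diag_plus_rank1 (a * c) (a * d + b * c + b * d * of_real (z \<bullet> z)) z"
proof -
  have zz: "(\<Sum>k\<in>UNIV. z $ k * cnj (z $ k)) = of_real (z \<bullet> z)"
    by (simp add: inner_vec_def complex_mult_cnj inner_complex_def power2_eq_square)
  have entry: "(\<Sum>k\<in>UNIV. (a * (if i = k then 1 else 0) + b * cnj (z $ i) * z $ k)
                  * (c * (if k = j then 1 else 0) + d * cnj (z $ k) * z $ j))
     = (a * c) * (if i = j then 1 else 0)
       + (a * d + b * c + b * d * of_real (z \<bullet> z)) * cnj (z $ i) * z $ j" for i j
  proof -
    have "(\<Sum>k\<in>UNIV. (a * (if i = k then 1 else 0) + b * cnj (z $ i) * z $ k)
                  * (c * (if k = j then 1 else 0) + d * cnj (z $ k) * z $ j))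
      = (\<Sum>k\<in>UNIV. (if k = i then a * c * (if k = j then 1 else 0) else 0)
                  + (if k = i then a * d * cnj (z $ k) * z $ j else 0)
                  + (if k = j then b * c * cnj (z $ i) * z $ k else 0)
                  + b * d * cnj (z $ i) * z $ j * (z $ k * cnj (z $ k)))"
      by (rule sum.cong) (auto simp: algebra_simps)
    also have "\<dots> = (a * c) * (if i = j then 1 else 0) + a * d * cnj (z $ i) * z $ j
        + b * c * cnj (z $ i) * z $ j + b * d * cnj (z $ i) * z $ j * (\<Sum>k\<in>UNIV. z $ k * cnj (z $ k))"
      by (simp add: sum.distrib sum.delta sum_distrib_left[symmetric])
    finally show ?thesis
      by (simp add: zz algebra_simps)
  qed
  show ?thesis
    by (simp add: diag_plus_rank1_def matrix_matrix_mult_def vec_eq_iff entry)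
qed

lemma matrix_inv_eqI:
  fixes A B :: "'a::comm_ring_1^'n::finite^'n"
  assumes AB: "A ** B = mat 1" and BA: "B ** A = mat 1"
  shows "matrix_inv A = B"
proof -
  have inv: "A ** matrix_inv A = mat 1 \<and> matrix_inv A ** A = mat 1"
    unfolding matrix_inv_def using AB BA by (intro someI_ex[of "\<lambda>B. A ** B = mat 1 \<and> B ** A = mat 1"]) blast
  have "matrix_inv A = matrix_inv A ** (A ** B)"
    using AB by simp
  also have "\<dots> = B"
    using inv by (simp add: matrix_mul_assoc)
  finally show ?thesis .
qed

lemma matrix_inv_diag_plus_rank1:
  fixes z :: "complex^'n::finite"
  assumes "a * c = 1" "a * d + b * c + b * d * of_real (z \<bullet> z) = 0"
  shows "matrix_inv (diag_plus_rank1 a b z) = diag_plus_rank1 c d z"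
proof (rule matrix_inv_eqI)
  have "mat 1 = diag_plus_rank1 1 0 (z :: complex^'n)"
    by (simp add: mat_def diag_plus_rank1_def)
  moreover have "c * a = 1" "c * b + d * a + d * b * of_real (z \<bullet> z) = 0"
    using assms by (simp_all add: algebra_simps)
  ultimately show "diag_plus_rank1 a b z ** diag_plus_rank1 c d z = mat 1"
    "diag_plus_rank1 c d z ** diag_plus_rank1 a b z = mat 1"
    using assms by (simp_all add: diag_plus_rank1_mult)
qed

lemma trace_diag_plus_rank1_mult:
  fixes z :: "complex^'n::finite" and H :: "complex^'n^'n"
  shows "trace (diag_plus_rank1 p q z ** H)
       = p * (\<Sum>i\<in>UNIV. H $ i $ i) + q * (\<Sum>i\<in>UNIV. \<Sum>k\<in>UNIV. cnj (z $ i) * z $ k * H $ k $ i)"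
proof -
  have "trace (diag_plus_rank1 p q z ** H)
     = (\<Sum>i\<in>UNIV. \<Sum>k\<in>UNIV. (if k = i then p * H $ k $ i else 0) + q * (cnj (z $ i) * z $ k * H $ k $ i))"
    unfolding trace_def matrix_matrix_mult_def diag_plus_rank1_def
    by (simp, intro sum.cong refl) (auto simp: algebra_simps)
  then show ?thesis
    by (simp add: sum.distrib sum.delta sum_distrib_left)
qed

definition imult :: "complex^'n::finite \<Rightarrow> complex^'n" where
  "imult z = (\<chi> k. \<i> * z $ k)"

lemma inner_imult: "(z::complex^'n::finite) \<bullet> imult z = 0" "imult z \<bullet> imult z = z \<bullet> z"
  by (simp_all add: inner_vec_def imult_def inner_complex_def algebra_simps)

lemma bilinear_sum_expand:
  fixes B :: "'a::real_vector \<Rightarrow> 'a \<Rightarrow> real"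
  assumes B: "bilinear B" and fin: "finite I"
  shows "B (\<Sum>k\<in>I. a k *\<^sub>R u k + b k *\<^sub>R w k) (\<Sum>i\<in>I. c i *\<^sub>R u i + d i *\<^sub>R w i)
       = (\<Sum>k\<in>I. \<Sum>i\<in>I. a k * c i * B (u k) (u i) + a k * d i * B (u k) (w i)
                        + b k * c i * B (w k) (u i) + b k * d i * B (w k) (w i))"
proof -
  have "B (\<Sum>k\<in>I. a k *\<^sub>R u k + b k *\<^sub>R w k) (\<Sum>i\<in>I. c i *\<^sub>R u i + d i *\<^sub>R w i)
      = (\<Sum>k\<in>I. \<Sum>i\<in>I. B (a k *\<^sub>R u k + b k *\<^sub>R w k) (c i *\<^sub>R u i + d i *\<^sub>R w i))"
    by (simp add: bilinear_sum[OF B] sum.cartesian_product)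
  then show ?thesis
    by (simp add: bilinear_ladd[OF B] bilinear_radd[OF B] bilinear_lmul[OF B] bilinear_rmul[OF B]
        algebra_simps)
qed

lemma Re_quadratic_hessC:
  fixes z :: "complex^'n::finite"
  assumes B: "bilinear (D2 f z)"
  shows "Re (\<Sum>i\<in>UNIV. \<Sum>k\<in>UNIV. cnj (z $ i) * z $ k * hessC f z $ k $ i)
       = (D2 f z z z + D2 f z (imult z) (imult z)) / 4"
proof -
  let ?B = "D2 f z" and ?x = "\<lambda>k. Re (z $ k)" and ?y = "\<lambda>k. Im (z $ k)"
  let ?e = "\<lambda>k. axis k 1 :: complex^'n" and ?g = "\<lambda>k. axis k \<i> :: complex^'n"
  have z: "z = (\<Sum>k\<in>UNIV. ?x k *\<^sub>R ?e k + ?y k *\<^sub>R ?g k)"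
    by (simp add: vec_eq_iff axis_def complex_eq_iff if_distrib cong: if_cong)
  have iz: "imult z = (\<Sum>k\<in>UNIV. (- ?y k) *\<^sub>R ?e k + ?x k *\<^sub>R ?g k)"
    by (simp add: imult_def vec_eq_iff axis_def complex_eq_iff if_distrib cong: if_cong)
  have "?B z z + ?B (imult z) (imult z) =
     (\<Sum>k\<in>UNIV. \<Sum>i\<in>UNIV. ?x k * ?x i * ?B (?e k) (?e i) + ?x k * ?y i * ?B (?e k) (?g i)
                        + ?y k * ?x i * ?B (?g k) (?e i) + ?y k * ?y i * ?B (?g k) (?g i))
   + (\<Sum>k\<in>UNIV. \<Sum>i\<in>UNIV. (- ?y k) * (- ?y i) * ?B (?e k) (?e i) + (- ?y k) * ?x i * ?B (?e k) (?g i)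
                        + ?x k * (- ?y i) * ?B (?g k) (?e i) + ?x k * ?x i * ?B (?g k) (?g i))"
    by (subst (1 2) z, subst (1 2) iz, simp only: bilinear_sum_expand[OF B finite])
  also have "\<dots> = (\<Sum>k\<in>UNIV. \<Sum>i\<in>UNIV. (?x k * ?x i + ?y k * ?y i) * (?B (?e k) (?e i) + ?B (?g k) (?g i))
                 + (?x k * ?y i - ?y k * ?x i) * (?B (?e k) (?g i) - ?B (?g k) (?e i)))"
    by (simp add: sum.distrib[symmetric] algebra_simps)
  also have "\<dots> = 4 * Re (\<Sum>k\<in>UNIV. \<Sum>i\<in>UNIV. cnj (z $ i) * z $ k * hessC f z $ k $ i)"
    by (simp add: hessC_def sum_distrib_left) (intro sum.cong refl, simp add: field_simps)
  also have "(\<Sum>k\<in>UNIV. \<Sum>i\<in>UNIV. cnj (z $ i) * z $ k * hessC f z $ k $ i)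
           = (\<Sum>i\<in>UNIV. \<Sum>k\<in>UNIV. cnj (z $ i) * z $ k * hessC f z $ k $ i)"
    by (rule sum.swap)
  finally show ?thesis
    by simp
qed

lemma Re_trace_hessC:
  "Re (\<Sum>i\<in>UNIV. hessC f z $ i $ i)
     = (\<Sum>i\<in>UNIV. D2 f z (axis i 1) (axis i 1) + D2 f z (axis i \<i>) (axis i \<i>)) / 4"
  by (simp add: hessC_def sum_divide_distrib)

lemma lap_eq:
  fixes z :: "complex^'n::finite"
  assumes z: "z \<noteq> 0" and B: "bilinear (D2 f z)"
  defines "s \<equiv> z \<bullet> z" and "n \<equiv> CARD('n)"
  shows "lap f z = s / phi n (ln s) *
            (\<Sum>i\<in>UNIV. D2 f z (axis i 1) (axis i 1) + D2 f z (axis i \<i>) (axis i \<i>))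
        + (phi n (ln s) - phi_t n (ln s)) / (phi n (ln s) * phi_t n (ln s))
            * (D2 f z z z + D2 f z (imult z) (imult z))"
proof -
  define p where "p = s / phi n (ln s)"
  define q where "q = (phi n (ln s) - phi_t n (ln s)) / (phi n (ln s) * phi_t n (ln s))"
  have n: "n \<ge> 1"
    by (simp add: n_def Suc_leI)
  have "0 < s"
    using z by (simp add: s_def)
  then have "matrix_inv (gmat z) = diag_plus_rank1 (of_real p) (of_real q) z"
    unfolding gmat_radial[OF z, folded s_def n_def]
    using phi_pos[OF n, of "ln s"] phi_t_pos[OF n, of "ln s"]
    by (intro matrix_inv_diag_plus_rank1)
      (simp_all add: p_def q_def s_def[symmetric] field_simps power2_eq_square flip: of_real_mult)
  then have "lap f z = 4 * (p * Re (\<Sum>i\<in>UNIV. hessC f z $ i $ i)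
       + q * Re (\<Sum>i\<in>UNIV. \<Sum>k\<in>UNIV. cnj (z $ i) * z $ k * hessC f z $ k $ i))"
    by (simp add: lap_def trace_diag_plus_rank1_mult)
  then show ?thesis
    unfolding Re_trace_hessC Re_quadratic_hessC[OF B] by (simp add: p_def q_def)
qed

section \<open>Comparison at an interior maximum\<close>

text \<open>\<open>C2_on\<close> without the continuity of second derivatives, which the maximum principle
  does not need.\<close>
definition twice_differentiable_on :: "'a::real_normed_vector set \<Rightarrow> ('a \<Rightarrow> real) \<Rightarrow> bool" where
  "twice_differentiable_on U u \<longleftrightarrow> (\<forall>x\<in>U. u differentiable (at x)) \<and>
     (\<forall>v. \<forall>x\<in>U. (\<lambda>y. frechet_derivative u (at y) v) differentiable (at x))"

lemma C2_on_imp_twice_differentiable_on: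
  "C2_on S u \<Longrightarrow> \<exists>U. open U \<and> S \<subseteq> U \<and> twice_differentiable_on U u"
  unfolding C2_on_def twice_differentiable_on_def by blast

lemma twice_differentiable_on_subset:
  "twice_differentiable_on U u \<Longrightarrow> V \<subseteq> U \<Longrightarrow> twice_differentiable_on V u"
  unfolding twice_differentiable_on_def by blast

lemma twice_differentiable_on_imp_continuous_on:
  "twice_differentiable_on U u \<Longrightarrow> continuous_on U u"
  unfolding twice_differentiable_on_def
  by (meson continuous_at_imp_continuous_on differentiable_imp_continuous_within)

lemma has_derivative_D2:
  "twice_differentiable_on U u \<Longrightarrow> z \<in> U \<Longrightarrow>
     ((\<lambda>y. frechet_derivative u (at y) v) has_derivative D2 u z v) (at z)"
  unfolding twice_differentiable_on_def D2_def[abs_def] by (simp add: frechet_derivative_works)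

lemma D2_bilinear:
  fixes u :: "complex^'n::finite \<Rightarrow> real"
  assumes U: "open U" "z \<in> U" and u: "twice_differentiable_on U u"
  shows "bilinear (D2 u z)"
proof -
  let ?F = "\<lambda>v y. frechet_derivative u (at y) v"
  have lin: "linear (frechet_derivative u (at y))" if "y \<in> U" for y
    using u that unfolding twice_differentiable_on_def
    by (meson frechet_derivative_works has_derivative_linear)
  have D2: "(?F v has_derivative D2 u z v) (at z)" for v
    by (rule has_derivative_D2[OF u U(2)])
  have "linear (\<lambda>v. D2 u z v w)" for w
  proof (rule linearI)
    fix v1 v2
    have "(?F (v1 + v2) has_derivative (\<lambda>w. D2 u z v1 w + D2 u z v2 w)) (at z)"
      by (rule has_derivative_transform_within_open[OF has_derivative_add[OF D2 D2] U])
        (simp add: linear_add[OF lin])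
    then show "D2 u z (v1 + v2) w = D2 u z v1 w + D2 u z v2 w"
      using has_derivative_unique[OF D2] by metis
  next
    fix r v
    have "(?F (r *\<^sub>R v) has_derivative (\<lambda>w. r * D2 u z v w)) (at z)"
      by (rule has_derivative_transform_within_open[OF has_derivative_mult_right[OF D2] U])
        (simp add: linear_scale[OF lin])
    then show "D2 u z (r *\<^sub>R v) w = r *\<^sub>R D2 u z v w"
      using has_derivative_unique[OF D2] by (metis real_scaleR_def)
  qed
  then show ?thesis
    unfolding bilinear_def using has_derivative_linear[OF D2] by blast
qed

lemma
  fixes u :: "complex^'n::finite \<Rightarrow> real"
  assumes U: "open U" and u: "twice_differentiable_on U u"
  shows twice_differentiable_on_minus: "twice_differentiable_on U (\<lambda>y. - u y)"
    and lap_minus_Xop_minus: "z \<in> U \<Longrightarrow>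
      lap (\<lambda>y. - u y) z - Xop (\<lambda>y. - u y) z = - (lap u z - Xop u z)"
proof -
  have fd: "frechet_derivative (\<lambda>y. - u y) (at x) = (\<lambda>v. - frechet_derivative u (at x) v)" if "x \<in> U" for x
    using u that unfolding twice_differentiable_on_def
    by (intro frechet_derivative_at[symmetric] has_derivative_minus) (simp add: frechet_derivative_works)
  have d2: "((\<lambda>y. frechet_derivative (\<lambda>y. - u y) (at y) v) has_derivative (\<lambda>w. - D2 u x v w)) (at x)"
    if "x \<in> U" for x v
    by (rule has_derivative_transform_within_open[OF has_derivative_minus[OF has_derivative_D2[OF u that]] U that])
      (simp add: fd)
  show "twice_differentiable_on U (\<lambda>y. - u y)"
    using u d2 unfolding twice_differentiable_on_def differentiable_def
    by (metis has_derivative_minus)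
  assume z: "z \<in> U"
  have "D2 (\<lambda>y. - u y) z v w = - D2 u z v w" for v w
    unfolding D2_def[of "\<lambda>y. - u y"] using fun_cong[OF frechet_derivative_at[OF d2[OF z, of v]], of w] by simp
  then have "hessC (\<lambda>y. - u y) z = - hessC u z"
    by (simp add: hessC_def vec_eq_iff complex_eq_iff) (simp add: field_simps)
  then show "lap (\<lambda>y. - u y) z - Xop (\<lambda>y. - u y) z = - (lap u z - Xop u z)"
    by (simp add: lap_def Xop_def fd[OF z] trace_def matrix_matrix_mult_def sum_negf)
qed

lemma abs_lap_minus_Xop_minus:
  fixes u :: "complex^'n::finite \<Rightarrow> real"
  assumes "open U" "twice_differentiable_on U u" "z \<in> U"
  shows "\<bar>lap (\<lambda>y. - u y) z - Xop (\<lambda>y. - u y) z\<bar> = \<bar>lap u z - Xop u z\<bar>"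
  using lap_minus_Xop_minus[OF assms] by simp

lemma DERIV2_nonpos_at_local_max:
  fixes k k' :: "real \<Rightarrow> real"
  assumes d: "0 < d"
    and dk: "\<And>t. \<bar>t\<bar> < d \<Longrightarrow> (k has_real_derivative k' t) (at t)"
    and dk': "(k' has_real_derivative c) (at 0)" and k'0: "k' 0 = 0"
    and mx: "\<And>t. \<bar>t\<bar> < d \<Longrightarrow> k t \<le> k 0"
  shows "c \<le> 0"
proof (rule ccontr)
  assume "\<not> c \<le> 0"
  then obtain d1 where d1: "0 < d1" "\<And>h. 0 < h \<Longrightarrow> h < d1 \<Longrightarrow> k' 0 < k' (0 + h)"
    using DERIV_pos_inc_right[OF dk'] by force
  define h where "h = min d1 d / 2"
  have h: "0 < h" "h < d1" "h < d"
    using d d1 by (auto simp: h_def)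
  have "k 0 < k h"
  proof (rule DERIV_pos_imp_increasing_open[OF h(1)])
    show "\<exists>y. (k has_real_derivative y) (at x) \<and> 0 < y" if "0 < x" "x < h" for x
      using that h d1(2)[of x] k'0 dk[of x] by auto
    show "continuous_on {0..h} k"
      using h by (intro continuous_at_imp_continuous_on ballI DERIV_isCont[OF dk]) auto
  qed
  then show False
    using mx[of h] h by simp
qed

lemma second_derivative_nonpos_at_local_max:
  fixes g :: "'a::real_normed_vector \<Rightarrow> real"
  assumes U: "open U" "z \<in> U" and mx: "\<And>y. y \<in> U \<Longrightarrow> g y \<le> g z"
    and dg: "\<And>y. y \<in> U \<Longrightarrow> (g has_derivative Dg y) (at y)"
    and dDg: "((\<lambda>y. Dg y w) has_derivative D2g) (at z)"
  shows "D2g w \<le> 0"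
proof -
  obtain e where e: "0 < e" "ball z e \<subseteq> U"
    using U open_contains_ball by blast
  define d where "d = e / (norm w + 1)"
  have d: "0 < d"
    using e by (simp add: d_def add_nonneg_pos)
  have inU: "z + t *\<^sub>R w \<in> U" if "\<bar>t\<bar> < d" for t
  proof -
    have "norm (t *\<^sub>R w) \<le> \<bar>t\<bar> * (norm w + 1)"
      by (simp add: mult_left_mono)
    also have "\<dots> < e"
      using that e by (simp add: d_def pos_less_divide_eq add_nonneg_pos)
    finally show ?thesis
      using e by (auto simp: dist_norm)
  qed
  have line: "((\<lambda>t. z + t *\<^sub>R w) has_derivative (\<lambda>s. s *\<^sub>R w)) (at t)" for t
    by (auto intro!: derivative_eq_intros)
  show ?thesis
  proof (rule DERIV2_nonpos_at_local_max[OF d])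
    show "((\<lambda>t. g (z + t *\<^sub>R w)) has_real_derivative Dg (z + t *\<^sub>R w) w) (at t)" if "\<bar>t\<bar> < d" for t
    proof (rule has_derivative_imp_has_field_derivative)
      show "((\<lambda>t. g (z + t *\<^sub>R w)) has_derivative (\<lambda>s. Dg (z + t *\<^sub>R w) (s *\<^sub>R w))) (at t)"
        by (rule has_derivative_compose[OF line dg[OF inU[OF that]]])
      show "s * Dg (z + t *\<^sub>R w) w = Dg (z + t *\<^sub>R w) (s *\<^sub>R w)" for s
        using linear_scale[OF has_derivative_linear[OF dg[OF inU[OF that]]]] by simp
    qed
    show "((\<lambda>t. Dg (z + t *\<^sub>R w) w) has_real_derivative D2g w) (at 0)"
    proof (rule has_derivative_imp_has_field_derivative)
      show "((\<lambda>t. Dg (z + t *\<^sub>R w) w) has_derivative (\<lambda>s. D2g (s *\<^sub>R w))) (at 0)"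
        using has_derivative_compose[OF line[of 0], of "\<lambda>y. Dg y w" D2g] dDg by simp
      show "s * D2g w = D2g (s *\<^sub>R w)" for s
        using linear_scale[OF has_derivative_linear[OF dDg]] by simp
    qed
    show "Dg (z + 0 *\<^sub>R w) w = 0"
      using differential_zero_maxmin[OF U(2) U(1) dg[OF U(2)]] mx by auto
    show "g (z + t *\<^sub>R w) \<le> g (z + 0 *\<^sub>R w)" if "\<bar>t\<bar> < d" for t
      using mx[OF inU[OF that]] by simp
  qed
qed

lemma lap_minus_Xop_le_at_local_max:
  fixes u \<psi> :: "complex^'n::finite \<Rightarrow> real"
  assumes U: "open U" "z \<in> U" and z: "z \<noteq> 0"
    and u: "twice_differentiable_on U u" and \<psi>: "twice_differentiable_on U \<psi>"
    and mx: "\<And>y. y \<in> U \<Longrightarrow> u y - \<psi> y \<le> u z - \<psi> z"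
  shows "lap u z - Xop u z \<le> lap \<psi> z - Xop \<psi> z"
proof -
  let ?Du = "\<lambda>y. frechet_derivative u (at y)" and ?D\<psi> = "\<lambda>y. frechet_derivative \<psi> (at y)"
  have dg: "((\<lambda>y. u y - \<psi> y) has_derivative (\<lambda>v. ?Du y v - ?D\<psi> y v)) (at y)" if "y \<in> U" for y
    using u \<psi> that unfolding twice_differentiable_on_def
    by (intro has_derivative_diff) (simp_all add: frechet_derivative_works)
  have "(\<lambda>v. ?Du z v - ?D\<psi> z v) = (\<lambda>v. 0)"
    by (rule differential_zero_maxmin[OF U(2) U(1) dg[OF U(2)]]) (use mx in auto)
  from fun_cong[OF this, of z] have X: "Xop u z = Xop \<psi> z"
    by (simp add: Xop_def)
  have D2_le: "D2 u z w w \<le> D2 \<psi> z w w" for w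
    using second_derivative_nonpos_at_local_max[OF U mx dg
        has_derivative_diff[OF has_derivative_D2[OF u U(2)] has_derivative_D2[OF \<psi> U(2)]]]
    by simp
  define n s where "n = CARD('n)" and "s = z \<bullet> z"
  have n: "n \<ge> 1"
    by (simp add: n_def Suc_leI)
  have "0 \<le> s / phi n (ln s)"
    using phi_pos[OF n, of "ln s"] by (simp add: s_def)
  moreover have "0 \<le> (phi n (ln s) - phi_t n (ln s)) / (phi n (ln s) * phi_t n (ln s))"
    using phi_pos[OF n, of "ln s"] phi_t_pos[OF n, of "ln s"] phi_t_le_phi[OF n, of "ln s"] by simp
  ultimately have "lap u z \<le> lap \<psi> z"
    unfolding lap_eq[OF z D2_bilinear[OF U u]] lap_eq[OF z D2_bilinear[OF U \<psi>]]
    by (intro add_mono mult_left_mono sum_mono D2_le) (simp_all add: n_def s_def)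
  then show ?thesis
    using X by simp
qed

text \<open>On functions of \<open>t = log |z|\<^sup>2\<close> alone, \<open>\<Delta> - X\<close> acts through \<open>radial_op n t f\<^sub>t f\<^sub>t\<^sub>t\<close>.\<close>
definition radial_op :: "nat \<Rightarrow> real \<Rightarrow> real \<Rightarrow> real \<Rightarrow> real" where
  "radial_op n t d1 d2 = 4 * d2 / phi_t n t + 4 * (real n - 1) * d1 / phi n t + 4 * d1"

lemma twice_differentiable_on_radial:
  assumes dH: "\<And>s. 0 < s \<Longrightarrow> (H has_real_derivative H1 s) (at s)"
    and dH1: "\<And>s. 0 < s \<Longrightarrow> (H1 has_real_derivative H2 s) (at s)"
  shows "twice_differentiable_on (- {0}) (\<lambda>y::'a::real_inner. H (y \<bullet> y))"
  unfolding twice_differentiable_on_def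
  using has_derivative_radial[OF dH] has_derivative_frechet_derivative_radial[OF dH dH1]
  by (auto simp: differentiable_def)

lemma lap_minus_Xop_radial_inner:
  fixes z :: "complex^'n::finite"
  assumes dH: "\<And>s. 0 < s \<Longrightarrow> (H has_real_derivative H1 s) (at s)"
    and dH1: "\<And>s. 0 < s \<Longrightarrow> (H1 has_real_derivative H2 s) (at s)" and z: "z \<noteq> 0"
  defines "s \<equiv> z \<bullet> z" and "n \<equiv> CARD('n)"
  shows "lap (\<lambda>y. H (y \<bullet> y)) z - Xop (\<lambda>y. H (y \<bullet> y)) z
      = s / phi n (ln s) * (4 * H2 s * s + 4 * real n * H1 s)
        + (phi n (ln s) - phi_t n (ln s)) / (phi n (ln s) * phi_t n (ln s)) * (4 * H2 s * s\<^sup>2 + 4 * H1 s * s)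
        + 4 * H1 s * s"
proof -
  have D: "D2 (\<lambda>y. H (y \<bullet> y)) z v w = 4 * H2 s * (z \<bullet> v) * (z \<bullet> w) + 2 * H1 s * (v \<bullet> w)" for v w
    unfolding s_def by (rule D2_radial[OF dH dH1 z])
  have "z \<bullet> axis i 1 = Re (z $ i)" "z \<bullet> axis i \<i> = Im (z $ i)" for i
    by (simp_all add: inner_axis inner_complex_def)
  then have "(\<Sum>i\<in>UNIV. (z \<bullet> axis i 1)\<^sup>2 + (z \<bullet> axis i \<i>)\<^sup>2) = s"
    by (simp add: s_def inner_vec_def inner_complex_def power2_eq_square)
  moreover have "(\<Sum>i\<in>UNIV. D2 (\<lambda>y. H (y \<bullet> y)) z (axis i 1) (axis i 1)
                        + D2 (\<lambda>y. H (y \<bullet> y)) z (axis i \<i>) (axis i \<i>))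
      = (\<Sum>i\<in>UNIV. 4 * H2 s * ((z \<bullet> axis i 1)\<^sup>2 + (z \<bullet> axis i \<i>)\<^sup>2) + 4 * H1 s)"
    by (intro sum.cong) (simp_all add: D inner_axis_axis power2_eq_square algebra_simps)
  ultimately have trace: "(\<Sum>i\<in>UNIV. D2 (\<lambda>y. H (y \<bullet> y)) z (axis i 1) (axis i 1)
                        + D2 (\<lambda>y. H (y \<bullet> y)) z (axis i \<i>) (axis i \<i>))
      = 4 * H2 s * s + 4 * real n * H1 s"
    by (simp add: sum.distrib sum_distrib_left[symmetric] n_def)
  have quadratic: "D2 (\<lambda>y. H (y \<bullet> y)) z z z + D2 (\<lambda>y. H (y \<bullet> y)) z (imult z) (imult z)
      = 4 * H2 s * s\<^sup>2 + 4 * H1 s * s"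
    by (simp add: D inner_imult s_def power2_eq_square)
  have X: "Xop (\<lambda>y. H (y \<bullet> y)) z = - 4 * H1 s * s"
    by (simp add: Xop_def frechet_derivative_radial[OF dH z] s_def)
  have B: "bilinear (D2 (\<lambda>y. H (y \<bullet> y)) z)"
    by (rule D2_bilinear[OF _ _ twice_differentiable_on_radial[OF dH dH1]]) (use z in auto)
  show ?thesis
    unfolding lap_eq[OF z B, folded s_def n_def] trace quadratic X by simp
qed

lemma
  fixes h :: "real \<Rightarrow> real"
  assumes dh: "\<And>t. (h has_real_derivative h1 t) (at t)"
    and dh1: "\<And>t. (h1 has_real_derivative h2 t) (at t)"
  shows twice_differentiable_on_radial_ln:
      "twice_differentiable_on (- {0}) (\<lambda>y::'a::real_inner. h (ln (y \<bullet> y)))"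
    and lap_minus_Xop_radial: "(z::complex^'n::finite) \<noteq> 0 \<Longrightarrow>
      lap (\<lambda>y. h (ln (y \<bullet> y))) z - Xop (\<lambda>y. h (ln (y \<bullet> y))) z
        = radial_op CARD('n) (ln (z \<bullet> z)) (h1 (ln (z \<bullet> z))) (h2 (ln (z \<bullet> z)))"
proof -
  define H1 where "H1 s = h1 (ln s) / s" for s
  define H2 where "H2 s = (h2 (ln s) - h1 (ln s)) / s\<^sup>2" for s
  have dH: "((\<lambda>s. h (ln s)) has_real_derivative H1 s) (at s)" if "0 < s" for s
    unfolding H1_def by (rule DERIV_comp_ln[OF dh that])
  have dH1: "(H1 has_real_derivative H2 s) (at s)" if "0 < s" for s
    unfolding H1_def[abs_def] H2_def by (rule DERIV_comp_ln_divide[OF dh1 that])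
  show "twice_differentiable_on (- {0}) (\<lambda>y::'a. h (ln (y \<bullet> y)))"
    by (rule twice_differentiable_on_radial[OF dH dH1])
  assume z: "z \<noteq> 0"
  define n s where "n = CARD('n)" and "s = z \<bullet> z"
  have n: "n \<ge> 1"
    by (simp add: n_def Suc_leI)
  have s: "0 < s"
    using z by (simp add: s_def)
  have "lap (\<lambda>y. h (ln (y \<bullet> y))) z - Xop (\<lambda>y. h (ln (y \<bullet> y))) z
      = s / phi n (ln s) * (4 * H2 s * s + 4 * real n * H1 s)
        + (phi n (ln s) - phi_t n (ln s)) / (phi n (ln s) * phi_t n (ln s)) * (4 * H2 s * s\<^sup>2 + 4 * H1 s * s)
        + 4 * H1 s * s"
    unfolding s_def n_def by (rule lap_minus_Xop_radial_inner[OF dH dH1 z])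
  also have "\<dots> = radial_op n (ln s) (h1 (ln s)) (h2 (ln s))"
    using s phi_pos[OF n, of "ln s"] phi_t_pos[OF n, of "ln s"]
    by (simp add: H1_def H2_def radial_op_def field_simps power2_eq_square)
  finally show "lap (\<lambda>y. h (ln (y \<bullet> y))) z - Xop (\<lambda>y. h (ln (y \<bullet> y))) z
      = radial_op CARD('n) (ln (z \<bullet> z)) (h1 (ln (z \<bullet> z))) (h2 (ln (z \<bullet> z)))"
    by (simp add: s_def n_def)
qed

lemma comparison_principle_annulus:
  fixes u :: "complex^'n::finite \<Rightarrow> real"
  assumes r1: "0 < r1" and U: "open U" "{y. r1 \<le> norm y \<and> norm y \<le> r2} \<subseteq> U"
    and u: "twice_differentiable_on U u"
    and dh: "\<And>t. (h has_real_derivative h1 t) (at t)"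
    and dh1: "\<And>t. (h1 has_real_derivative h2 t) (at t)"
    and super: "\<And>y. r1 < norm y \<Longrightarrow> norm y < r2 \<Longrightarrow>
      radial_op CARD('n) (ln (y \<bullet> y)) (h1 (ln (y \<bullet> y))) (h2 (ln (y \<bullet> y))) < lap u y - Xop u y"
    and bd: "\<And>y. norm y = r1 \<or> norm y = r2 \<Longrightarrow> u y \<le> h (ln (y \<bullet> y))"
    and p: "r1 \<le> norm p" "norm p \<le> r2"
  shows "u p \<le> h (ln (p \<bullet> p))"
proof (rule ccontr)
  assume p_above: "\<not> ?thesis"
  define \<psi> where "\<psi> y = h (ln (y \<bullet> y))" for y :: "complex^'n"
  define K where "K = cball (0::complex^'n) r2 \<inter> - ball 0 r1"
  have \<psi>: "twice_differentiable_on (- {0}) \<psi>"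
    unfolding \<psi>_def by (rule twice_differentiable_on_radial_ln[OF dh dh1])
  have "K \<subseteq> U" "K \<subseteq> - {0}"
    using U(2) r1 by (auto simp: K_def)
  then have "continuous_on K (\<lambda>y. u y - \<psi> y)"
    using twice_differentiable_on_imp_continuous_on[OF twice_differentiable_on_subset[OF u]]
      twice_differentiable_on_imp_continuous_on[OF twice_differentiable_on_subset[OF \<psi>]]
    by (intro continuous_intros) auto
  moreover have "compact K" "p \<in> K"
    using p by (auto simp: K_def intro!: compact_Int_closed)
  ultimately obtain q where q: "q \<in> K" and max: "\<And>y. y \<in> K \<Longrightarrow> u y - \<psi> y \<le> u q - \<psi> q"
    using continuous_attains_sup[of K "\<lambda>y. u y - \<psi> y"] by blast
  have "0 < u q - \<psi> q"
    using max[OF \<open>p \<in> K\<close>] p_above by (simp add: \<psi>_def)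
  then have q_int: "r1 < norm q" "norm q < r2"
    using q bd[of q] by (force simp: K_def \<psi>_def)+
  define V where "V = ball (0::complex^'n) r2 \<inter> - cball 0 r1"
  have V: "open V" "q \<in> V" "V \<subseteq> K" "V \<subseteq> U" "V \<subseteq> - {0}"
    using q_int \<open>K \<subseteq> U\<close> r1 by (auto simp: V_def K_def)
  have "lap u q - Xop u q \<le> lap \<psi> q - Xop \<psi> q"
    using q_int r1 max V
    by (intro lap_minus_Xop_le_at_local_max[OF V(1,2)] twice_differentiable_on_subset[OF u]
        twice_differentiable_on_subset[OF \<psi>]) auto
  also have "\<dots> = radial_op CARD('n) (ln (q \<bullet> q)) (h1 (ln (q \<bullet> q))) (h2 (ln (q \<bullet> q)))"
    unfolding \<psi>_def[abs_def] using q_int r1 by (intro lap_minus_Xop_radial[OF dh dh1]) auto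
  finally show False
    using super[OF q_int] by simp
qed

section \<open>Barriers\<close>

definition phi_decay :: "nat \<Rightarrow> real \<Rightarrow> real \<Rightarrow> real" where
  "phi_decay n k t = exp (- k * phi n t)"

lemma phi_decay_pos: "0 < phi_decay n k t"
  by (simp add: phi_decay_def)

lemma phi_decay_has_real_derivative:
  "n \<ge> 1 \<Longrightarrow> (phi_decay n k has_real_derivative - k * phi_t n t * phi_decay n k t) (at t)"
  unfolding phi_decay_def[abs_def] by (auto intro!: derivative_eq_intros phi_has_real_derivative)

lemma phi_decay'_has_real_derivative:
  "n \<ge> 1 \<Longrightarrow> ((\<lambda>t. - k * phi_t n t * phi_decay n k t) has_real_derivative
      - k * (phi_tt n t - k * (phi_t n t)\<^sup>2) * phi_decay n k t) (at t)"
  unfolding phi_decay_def[abs_def]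
  by (auto intro!: derivative_eq_intros phi_has_real_derivative phi_t_has_real_derivative
      simp: power2_eq_square algebra_simps)

lemma radial_op_phi_decay_le:
  assumes n: "n \<ge> 1" and k: "0 \<le> k"
  shows "radial_op n t (- k * phi_t n t * phi_decay n k t) (- k * (phi_tt n t - k * (phi_t n t)\<^sup>2) * phi_decay n k t)
      \<le> - 4 * k * (1 - k) * real n * phi_decay n k t"
proof -
  have "radial_op n t (- k * phi_t n t * phi_decay n k t) (- k * (phi_tt n t - k * (phi_t n t)\<^sup>2) * phi_decay n k t)
      = - 4 * k * phi_decay n k t * (real n - k * phi_t n t)"
    using phi_pos[OF n, of t] phi_t_pos[OF n, of t]
    by (simp add: radial_op_def phi_tt_def field_simps power2_eq_square)
  also have "\<dots> \<le> - 4 * k * phi_decay n k t * ((1 - k) * real n)"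
    using k phi_t_le_n[OF n, of t] by (intro mult_left_mono_neg) (auto simp: phi_decay_def algebra_simps mult_left_mono)
  finally show ?thesis
    by (simp add: algebra_simps)
qed

lemma radial_op_phi_decay_neg:
  assumes n: "n \<ge> 1" and k: "0 < k" "k < 1"
  shows "radial_op n t (- k * phi_t n t * phi_decay n k t) (- k * (phi_tt n t - k * (phi_t n t)\<^sup>2) * phi_decay n k t) < 0"
proof -
  have "0 < 4 * k * (1 - k) * real n * phi_decay n k t"
    using k n by (simp add: phi_decay_def)
  then show ?thesis
    using radial_op_phi_decay_le[OF n, of k t] k by linarith
qed

lemma radial_op_affine_neg:
  assumes "n \<ge> 1"
  shows "radial_op n t (- 1) 0 < 0"
proof -
  have "- 4 * (real n - 1) / phi n t \<le> 0"
    using assms phi_pos[OF assms, of t] by (intro divide_nonpos_pos) auto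
  then show ?thesis
    by (simp add: radial_op_def)
qed

lemma radial_op_linear:
  "radial_op n t (a * x1 + b * y1) (a * x2 + b * y2) = a * radial_op n t x1 x2 + b * radial_op n t y1 y2"
  by (simp add: radial_op_def divide_inverse algebra_simps)

lemma radial_op_barrier_lt:
  assumes n: "n \<ge> 1" and \<delta>: "0 < \<delta>" "\<delta> < 1" and \<epsilon>: "0 < \<epsilon>"
    and g: "radial_op n t g1 g2 < 0"
    and L: "exp (\<delta> * phi n t) * \<bar>L\<bar> \<le> b" and M: "b / (4 * \<delta> * (1 - \<delta>) * real n) \<le> M"
  shows "radial_op n t (M * (- \<delta> * phi_t n t * phi_decay n \<delta> t) + \<epsilon> * g1)
      (M * (- \<delta> * (phi_tt n t - \<delta> * (phi_t n t)\<^sup>2) * phi_decay n \<delta> t) + \<epsilon> * g2) < L"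
proof -
  let ?c = "4 * \<delta> * (1 - \<delta>) * real n" and ?e = "phi_decay n \<delta> t"
  let ?d1 = "- \<delta> * phi_t n t * ?e" and ?d2 = "- \<delta> * (phi_tt n t - \<delta> * (phi_t n t)\<^sup>2) * ?e"
  have c: "0 < ?c"
    using n \<delta> by simp
  have e: "0 < ?e" "exp (\<delta> * phi n t) * ?e = 1"
    by (simp_all add: phi_decay_def flip: exp_add)
  have "0 \<le> b"
    using L by (smt (verit) exp_gt_zero mult_nonneg_nonneg)
  have bM: "b \<le> M * ?c"
    using M c by (simp add: pos_divide_le_eq)
  then have "0 \<le> M"
    using \<open>0 \<le> b\<close> c by (smt (verit) mult_neg_pos)
  have "\<bar>L\<bar> = exp (\<delta> * phi n t) * \<bar>L\<bar> * ?e"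
    using e(2) by (simp add: mult.commute mult.left_commute)
  also have "\<dots> \<le> b * ?e"
    using L e(1) by (simp add: mult_right_mono)
  also have "\<dots> \<le> M * ?c * ?e"
    using bM e(1) by (simp add: mult_right_mono)
  finally have L_ge: "- (M * ?c * ?e) \<le> L"
    by linarith
  have "M * radial_op n t ?d1 ?d2 \<le> M * (- ?c * ?e)"
    using radial_op_phi_decay_le[OF n, of \<delta> t] \<delta> \<open>0 \<le> M\<close> by (intro mult_left_mono) simp_all
  moreover have "\<epsilon> * radial_op n t g1 g2 < 0"
    using \<epsilon> g by (rule mult_pos_neg)
  ultimately have "M * radial_op n t ?d1 ?d2 + \<epsilon> * radial_op n t g1 g2 < L"
    using L_ge by simp
  then show ?thesis
    by (simp only: radial_op_linear)
qed

lemma phi_decay_dominated: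
  assumes n: "n \<ge> 1" and \<delta>: "0 < \<delta>" and \<epsilon>: "0 < \<epsilon>"
  obtains T where "\<And>t. T \<le> t \<Longrightarrow> B * phi_decay n \<delta> t \<le> \<epsilon> * phi_decay n (\<delta> / 2) t"
proof
  define C where "C = max 1 (2 * ln (max B 1 / \<epsilon>) / \<delta>)"
  fix t
  assume "ln (C ^ n * exp C) / real n \<le> t"
  then have "2 * ln (max B 1 / \<epsilon>) / \<delta> \<le> phi n t"
    using phi_ge[OF n, of C t] by (simp add: C_def)
  then have "ln (max B 1 / \<epsilon>) \<le> \<delta> / 2 * phi n t"
    using \<delta> by (simp add: divide_le_eq mult.commute)
  then have "max B 1 / \<epsilon> \<le> exp (\<delta> / 2 * phi n t)"
    using \<epsilon> by (metis exp_le_cancel_iff exp_ln max.strict_coboundedI2 zero_less_divide_iff zero_less_one)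
  then have "B \<le> \<epsilon> * exp (\<delta> / 2 * phi n t)"
    using \<epsilon> by (simp add: divide_le_eq mult.commute)
  then have "B * exp (- \<delta> * phi n t) \<le> \<epsilon> * exp (\<delta> / 2 * phi n t) * exp (- \<delta> * phi n t)"
    by (simp add: mult_right_mono)
  also have "\<dots> = \<epsilon> * exp (- (\<delta> / 2) * phi n t)"
    by (simp add: mult.assoc flip: exp_add)
  finally show "B * phi_decay n \<delta> t \<le> \<epsilon> * phi_decay n (\<delta> / 2) t"
    by (simp add: phi_decay_def)
qed

lemma wgt_pos: "0 < wgt \<delta> z"
  by (simp add: wgt_def)

lemma wgt_zero: "wgt \<delta> (0::complex^'n::finite) = 1"
  by (simp add: wgt_def phiz_def)

lemma wgt_eq: "(y::complex^'n::finite) \<noteq> 0 \<Longrightarrow> wgt \<delta> y = exp (\<delta> * phi CARD('n) (ln (y \<bullet> y)))"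
  by (simp add: wgt_def phiz_def power2_norm_eq_inner)

lemma wgt_mult_le_iff:
  fixes y :: "complex^'n::finite"
  assumes "y \<noteq> 0"
  shows "wgt \<delta> y * x \<le> M \<longleftrightarrow> x \<le> M * phi_decay CARD('n) \<delta> (ln (y \<bullet> y))"
proof -
  let ?e = "phi_decay CARD('n) \<delta> (ln (y \<bullet> y))"
  have "wgt \<delta> y * ?e = 1"
    using assms by (simp add: wgt_eq phi_decay_def flip: exp_add)
  then have "wgt \<delta> y * (M * ?e) = M"
    by (metis mult.left_commute mult_1_right)
  then have "wgt \<delta> y * x \<le> M \<longleftrightarrow> wgt \<delta> y * x \<le> wgt \<delta> y * (M * ?e)"
    by (simp only:)
  also have "\<dots> \<longleftrightarrow> x \<le> M * ?e"
    by (rule mult_le_cancel_left_pos[OF wgt_pos])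
  finally show ?thesis .
qed

lemma weighted_comparison_annulus:
  fixes u :: "complex^'n::finite \<Rightarrow> real"
  defines "n \<equiv> CARD('n)"
  assumes \<delta>: "0 < \<delta>" "\<delta> < 1" and r1: "0 < r1"
    and U: "open U" "{y. r1 \<le> norm y \<and> norm y \<le> r2} \<subseteq> U" and u: "twice_differentiable_on U u"
    and dg: "\<And>t. (g has_real_derivative g1 t) (at t)"
    and dg1: "\<And>t. (g1 has_real_derivative g2 t) (at t)"
    and g: "\<And>t. radial_op n t (g1 t) (g2 t) < 0" and \<epsilon>: "0 < \<epsilon>"
    and L: "\<And>y. r1 \<le> norm y \<Longrightarrow> norm y \<le> r2 \<Longrightarrow> wgt \<delta> y * \<bar>lap u y - Xop u y\<bar> \<le> b"
    and M: "b / (4 * \<delta> * (1 - \<delta>) * real n) \<le> M"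
    and bd: "\<And>y. norm y = r1 \<or> norm y = r2 \<Longrightarrow>
      u y \<le> M * phi_decay n \<delta> (ln (y \<bullet> y)) + \<epsilon> * g (ln (y \<bullet> y))"
    and p: "r1 \<le> norm p" "norm p \<le> r2"
  shows "u p \<le> M * phi_decay n \<delta> (ln (p \<bullet> p)) + \<epsilon> * g (ln (p \<bullet> p))"
proof -
  have n: "n \<ge> 1"
    by (simp add: n_def Suc_leI)
  show ?thesis
  proof (rule comparison_principle_annulus[OF r1 U u _ _ _ bd p, folded n_def])
    show "((\<lambda>t. M * phi_decay n \<delta> t + \<epsilon> * g t) has_real_derivative
        M * (- \<delta> * phi_t n t * phi_decay n \<delta> t) + \<epsilon> * g1 t) (at t)" for t
      by (intro DERIV_add DERIV_cmult phi_decay_has_real_derivative[OF n] dg)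
    show "((\<lambda>t. M * (- \<delta> * phi_t n t * phi_decay n \<delta> t) + \<epsilon> * g1 t) has_real_derivative
        M * (- \<delta> * (phi_tt n t - \<delta> * (phi_t n t)\<^sup>2) * phi_decay n \<delta> t) + \<epsilon> * g2 t) (at t)" for t
      by (intro DERIV_add DERIV_cmult phi_decay'_has_real_derivative[OF n] dg1)
    fix y :: "complex^'n"
    assume y: "r1 < norm y" "norm y < r2"
    then have "y \<noteq> 0"
      using r1 by auto
    then show "radial_op n (ln (y \<bullet> y))
        (M * (- \<delta> * phi_t n (ln (y \<bullet> y)) * phi_decay n \<delta> (ln (y \<bullet> y))) + \<epsilon> * g1 (ln (y \<bullet> y)))
        (M * (- \<delta> * (phi_tt n (ln (y \<bullet> y)) - \<delta> * (phi_t n (ln (y \<bullet> y)))\<^sup>2) * phi_decay n \<delta> (ln (y \<bullet> y)))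
          + \<epsilon> * g2 (ln (y \<bullet> y)))
      < lap u y - Xop u y"
      using L[of y] y by (intro radial_op_barrier_lt[OF n \<delta> \<epsilon> g _ M]) (auto simp: wgt_eq n_def)
  qed
qed

lemma weighted_comparison_annulus_log:
  fixes u :: "complex^'n::finite \<Rightarrow> real"
  defines "n \<equiv> CARD('n)"
  assumes \<delta>: "0 < \<delta>" "\<delta> < 1" and r1: "0 < r1"
    and U: "open U" "{y. r1 \<le> norm y \<and> norm y \<le> r2} \<subseteq> U" and u: "twice_differentiable_on U u"
    and \<epsilon>: "0 < \<epsilon>"
    and L: "\<And>y. r1 \<le> norm y \<Longrightarrow> norm y \<le> r2 \<Longrightarrow> wgt \<delta> y * \<bar>lap u y - Xop u y\<bar> \<le> b"
    and M: "b / (4 * \<delta> * (1 - \<delta>) * real n) \<le> M"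
    and bd: "\<And>y. norm y = r1 \<or> norm y = r2 \<Longrightarrow>
      u y \<le> M * phi_decay n \<delta> (ln (y \<bullet> y)) + \<epsilon> * (ln (r2\<^sup>2) - ln (y \<bullet> y))"
    and p: "r1 \<le> norm p" "norm p \<le> r2"
  shows "u p \<le> M * phi_decay n \<delta> (ln (p \<bullet> p)) + \<epsilon> * (ln (r2\<^sup>2) - ln (p \<bullet> p))"
proof (rule weighted_comparison_annulus[OF \<delta> r1 U u _ _ _ \<epsilon> L M[unfolded n_def] bd[unfolded n_def] p,
      folded n_def])
  show "((\<lambda>t. ln (r2\<^sup>2) - t) has_real_derivative - 1) (at t)" for t
    by (auto intro!: derivative_eq_intros)
  show "((\<lambda>t. - 1) has_real_derivative 0) (at t)" for t :: real
    by simp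
  show "radial_op n t (- 1) 0 < 0" for t
    by (rule radial_op_affine_neg) (simp add: n_def Suc_leI)
qed

section \<open>The three estimates\<close>

lemma le_of_forall_pos_le_add_mult:
  fixes x y c :: real
  assumes "\<And>\<epsilon>. 0 < \<epsilon> \<Longrightarrow> x \<le> y + \<epsilon> * c"
  shows "x \<le> y"
proof (rule field_le_epsilon)
  fix e :: real
  assume "0 < e"
  then have "x \<le> y + e / (\<bar>c\<bar> + 1) * c"
    by (intro assms) (simp add: add_nonneg_pos)
  also have "e / (\<bar>c\<bar> + 1) * c \<le> e / (\<bar>c\<bar> + 1) * (\<bar>c\<bar> + 1)"
    using \<open>0 < e\<close> by (intro mult_left_mono) auto
  also have "\<dots> = e"
    by simp
  finally show "x \<le> y + e"
    by simp
qed

lemma weighted_comparison_punctured_ball: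
  fixes u :: "complex^'n::finite \<Rightarrow> real"
  assumes \<delta>: "0 < \<delta>" "\<delta> < 1" and R: "0 < R"
    and U: "open U" "cball 0 R \<subseteq> U" and u: "twice_differentiable_on U u"
    and bd: "\<And>y. norm y = R \<Longrightarrow> wgt \<delta> y * u y \<le> M"
    and L: "\<And>y. norm y \<le> R \<Longrightarrow> wgt \<delta> y * \<bar>lap u y - Xop u y\<bar> \<le> b"
    and M: "b / (4 * \<delta> * (1 - \<delta>) * real CARD('n)) \<le> M" "0 \<le> M"
    and C: "\<And>y. norm y \<le> R \<Longrightarrow> u y \<le> C" and \<epsilon>: "0 < \<epsilon>"
    and p: "p \<noteq> 0" "norm p \<le> R"
  shows "u p \<le> M * phi_decay CARD('n) \<delta> (ln (p \<bullet> p)) + \<epsilon> * (ln (R\<^sup>2) - ln (p \<bullet> p))"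
proof -
  define n where "n = CARD('n)"
  text \<open>The inner radius \<open>\<rho>\<close> is so small that the barrier exceeds \<open>sup u\<close> on the inner circle.\<close>
  define \<rho> where "\<rho> = min (norm p) (exp ((ln (R\<^sup>2) - C / \<epsilon>) / 2))"
  have \<rho>: "0 < \<rho>" "\<rho> \<le> norm p"
    using p by (auto simp: \<rho>_def)
  have "\<rho> \<le> exp ((ln (R\<^sup>2) - C / \<epsilon>) / 2)"
    by (simp add: \<rho>_def)
  then have "ln \<rho> \<le> (ln (R\<^sup>2) - C / \<epsilon>) / 2"
    using \<rho>(1) by (metis ln_exp ln_le_cancel_iff exp_gt_zero)
  then have ln\<rho>: "C \<le> \<epsilon> * (ln (R\<^sup>2) - ln (\<rho>\<^sup>2))"
    using \<rho>(1) \<epsilon> by (simp add: ln_realpow field_simps)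
  have "u p \<le> M * phi_decay n \<delta> (ln (p \<bullet> p)) + \<epsilon> * (ln (R\<^sup>2) - ln (p \<bullet> p))"
  proof (rule weighted_comparison_annulus_log[OF \<delta> \<rho>(1) U(1) _ u \<epsilon> _ M(1) _ \<rho>(2) p(2),
        folded n_def])
    show "{y. \<rho> \<le> norm y \<and> norm y \<le> R} \<subseteq> U"
      using U(2) by auto
    show "wgt \<delta> z * \<bar>lap u z - Xop u z\<bar> \<le> b" if "\<rho> \<le> norm z" "norm z \<le> R" for z
      using L that by simp
    fix z :: "complex^'n"
    have M_nonneg: "0 \<le> M * phi_decay n \<delta> (ln (z \<bullet> z))"
      using M(2) phi_decay_pos[of n] by (simp add: less_imp_le)
    assume "norm z = \<rho> \<or> norm z = R"
    then show "u z \<le> M * phi_decay n \<delta> (ln (z \<bullet> z)) + \<epsilon> * (ln (R\<^sup>2) - ln (z \<bullet> z))"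
    proof
      assume "norm z = \<rho>"
      then have "u z \<le> \<epsilon> * (ln (R\<^sup>2) - ln (z \<bullet> z))"
        using C[of z] \<rho> p(2) ln\<rho> by (simp add: power2_norm_eq_inner[symmetric])
      then show ?thesis
        using M_nonneg by linarith
    next
      assume z: "norm z = R"
      then have "z \<noteq> 0"
        using R by auto
      then show ?thesis
        using bd[OF z] z by (simp add: wgt_mult_le_iff n_def power2_norm_eq_inner[symmetric])
    qed
  qed
  then show ?thesis
    by (simp add: n_def)
qed

lemma weighted_upper_bound_punctured_ball:
  fixes u :: "complex^'n::finite \<Rightarrow> real"
  assumes \<delta>: "0 < \<delta>" "\<delta> < 1" and R: "0 < R"
    and U: "open U" "cball 0 R \<subseteq> U" and u: "twice_differentiable_on U u"
    and bd: "\<And>y. norm y = R \<Longrightarrow> wgt \<delta> y * u y \<le> M"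
    and L: "\<And>y. norm y \<le> R \<Longrightarrow> wgt \<delta> y * \<bar>lap u y - Xop u y\<bar> \<le> b"
    and M: "b / (4 * \<delta> * (1 - \<delta>) * real CARD('n)) \<le> M" "0 \<le> M"
    and p: "p \<noteq> 0" "norm p \<le> R"
  shows "u p \<le> M * phi_decay CARD('n) \<delta> (ln (p \<bullet> p))"
proof -
  obtain C where C: "\<And>y. norm y \<le> R \<Longrightarrow> u y \<le> C"
    using continuous_attains_sup[OF compact_cball _
        twice_differentiable_on_imp_continuous_on[OF twice_differentiable_on_subset[OF u U(2)]]] R
    by fastforce
  show ?thesis
    using weighted_comparison_punctured_ball[OF assms(1-10) C _ p] by (rule le_of_forall_pos_le_add_mult)
qed

lemma weighted_upper_bound_ball:
  fixes u :: "complex^'n::finite \<Rightarrow> real"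
  assumes \<delta>: "0 < \<delta>" "\<delta> < 1" and R: "0 < R"
    and U: "open U" "cball 0 R \<subseteq> U" and u: "twice_differentiable_on U u"
    and bd: "\<And>y. norm y = R \<Longrightarrow> wgt \<delta> y * u y \<le> M"
    and L: "\<And>y. norm y \<le> R \<Longrightarrow> wgt \<delta> y * \<bar>lap u y - Xop u y\<bar> \<le> b"
    and M: "b / (4 * \<delta> * (1 - \<delta>) * real CARD('n)) \<le> M" "0 \<le> M"
    and p: "norm p \<le> R"
  shows "wgt \<delta> p * u p \<le> M"
proof (cases "p = 0")
  case False
  then show ?thesis
    using weighted_upper_bound_punctured_ball[OF assms(1-10) False p] by (simp add: wgt_mult_le_iff)
next
  case True
  have "u y \<le> M" if "y \<in> ball 0 R - {0}" for y
  proof -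
    have "phi_decay CARD('n) \<delta> (ln (y \<bullet> y)) \<le> 1"
      using \<delta> phi_pos[of "CARD('n)"] by (simp add: phi_decay_def less_imp_le Suc_leI)
    then have "M * phi_decay CARD('n) \<delta> (ln (y \<bullet> y)) \<le> M"
      using M(2) by (simp add: mult_left_le)
    moreover have "y \<noteq> 0" "norm y \<le> R"
      using that by auto
    ultimately show ?thesis
      using weighted_upper_bound_punctured_ball[OF assms(1-10), of y] by linarith
  qed
  moreover have "closure (ball 0 R - {0}) \<subseteq> cball (0::complex^'n) R"
    using closure_mono[of "ball 0 R - {0}" "ball (0::complex^'n) R"] R by auto
  then have "continuous_on (closure (ball 0 R - {0})) u"
    using twice_differentiable_on_imp_continuous_on[OF twice_differentiable_on_subset[OF u U(2)]]
      continuous_on_subset by blast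
  moreover have "(0::complex^'n) \<in> closure (ball 0 R - {0})"
    using R by (simp add: islimpt_in_closure[symmetric] islimpt_ball)
  ultimately have "u 0 \<le> M"
    using continuous_le_on_closure[where S = "ball 0 R - {0::complex^'n}"] by blast
  then show ?thesis
    using True by (simp add: wgt_zero)
qed

lemma weighted_upper_bound_annulus:
  fixes u :: "complex^'n::finite \<Rightarrow> real"
  assumes \<delta>: "0 < \<delta>" "\<delta> < 1" and r0: "1 \<le> r0"
    and U: "open U" "{y. 1 \<le> norm y \<and> norm y \<le> r0} \<subseteq> U" and u: "twice_differentiable_on U u"
    and inner: "\<And>y. norm y = 1 \<Longrightarrow> wgt \<delta> y * u y \<le> M"
    and outer: "\<And>y. norm y = r0 \<Longrightarrow> u y = 0"
    and L: "\<And>y. 1 \<le> norm y \<Longrightarrow> norm y \<le> r0 \<Longrightarrow> wgt \<delta> y * \<bar>lap u y - Xop u y\<bar> \<le> b"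
    and M: "b / (4 * \<delta> * (1 - \<delta>) * real CARD('n)) \<le> M" "0 \<le> M"
    and p: "1 \<le> norm p" "norm p \<le> r0"
  shows "wgt \<delta> p * u p \<le> M"
proof -
  define n where "n = CARD('n)"
  have "u p \<le> M * phi_decay n \<delta> (ln (p \<bullet> p)) + \<epsilon> * (ln (r0\<^sup>2) - ln (p \<bullet> p))" if "0 < \<epsilon>" for \<epsilon>
  proof (rule weighted_comparison_annulus_log[OF \<delta> zero_less_one U u that L M(1) _ p, folded n_def])
    fix y :: "complex^'n"
    have M_nonneg: "0 \<le> M * phi_decay n \<delta> (ln (y \<bullet> y))"
      using M(2) phi_decay_pos[of n] by (simp add: less_imp_le)
    assume "norm y = 1 \<or> norm y = r0"
    then show "u y \<le> M * phi_decay n \<delta> (ln (y \<bullet> y)) + \<epsilon> * (ln (r0\<^sup>2) - ln (y \<bullet> y))"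
    proof
      assume y: "norm y = 1"
      then have "y \<noteq> 0"
        by auto
      then have "u y \<le> M * phi_decay n \<delta> (ln (y \<bullet> y))"
        using inner[OF y] by (simp add: wgt_mult_le_iff n_def)
      moreover have "0 \<le> ln (r0\<^sup>2) - ln (y \<bullet> y)"
        using y r0 by (simp add: power2_norm_eq_inner[symmetric])
      ultimately show ?thesis
        using that by (simp add: add_increasing2)
    next
      assume y: "norm y = r0"
      then show ?thesis
        using outer[OF y] M_nonneg by (simp add: power2_norm_eq_inner[symmetric])
    qed
  qed
  then have "u p \<le> M * phi_decay n \<delta> (ln (p \<bullet> p))"
    by (rule le_of_forall_pos_le_add_mult)
  moreover have "p \<noteq> 0"
    using p by auto
  ultimately show ?thesis
    by (simp add: wgt_mult_le_iff n_def)
qed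

lemma weighted_comparison_exterior:
  fixes u :: "complex^'n::finite \<Rightarrow> real"
  assumes \<delta>: "0 < \<delta>" "\<delta> < 1"
    and U: "open U" "{y. 1 \<le> norm y} \<subseteq> U" and u: "twice_differentiable_on U u"
    and inner: "\<And>y. norm y = 1 \<Longrightarrow> wgt \<delta> y * u y \<le> M"
    and bounded: "\<And>y. 1 \<le> norm y \<Longrightarrow> wgt \<delta> y * u y \<le> B"
    and L: "\<And>y. 1 \<le> norm y \<Longrightarrow> wgt \<delta> y * \<bar>lap u y - Xop u y\<bar> \<le> b"
    and M: "b / (4 * \<delta> * (1 - \<delta>) * real CARD('n)) \<le> M" "0 \<le> M"
    and \<epsilon>: "0 < \<epsilon>" and p: "1 \<le> norm p"
  shows "u p \<le> M * phi_decay CARD('n) \<delta> (ln (p \<bullet> p))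
    + \<epsilon> * phi_decay CARD('n) (\<delta> / 2) (ln (p \<bullet> p))"
proof -
  define n where "n = CARD('n)"
  have n: "n \<ge> 1"
    by (simp add: n_def Suc_leI)
  text \<open>The second barrier \<open>\<epsilon> e\<^sup>-\<^sup>\<delta>\<^sup>\<phi>\<^sup>/\<^sup>2\<close> eventually dominates the bounded
    function \<open>e\<^sup>\<delta>\<^sup>\<phi> u\<close>, which supplies the outer boundary of a large annulus.\<close>
  obtain T where T: "\<And>t. T \<le> t \<Longrightarrow> B * phi_decay n \<delta> t \<le> \<epsilon> * phi_decay n (\<delta> / 2) t"
    using phi_decay_dominated[OF n \<delta>(1) \<epsilon>] by blast
  define R where "R = max (norm p) (exp (T / 2))"
  have R: "1 \<le> R" "norm p \<le> R"
    using p by (auto simp: R_def)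
  have "exp (T / 2) \<le> R"
    by (simp add: R_def)
  then have "T / 2 \<le> ln R"
    using R ln_ge_iff[of R "T / 2"] by linarith
  then have "T \<le> ln (R\<^sup>2)"
    using R by (simp add: ln_realpow)
  have half: "0 < \<delta> / 2" "\<delta> / 2 < 1"
    using \<delta> by simp_all
  have "u p \<le> M * phi_decay n \<delta> (ln (p \<bullet> p)) + \<epsilon> * phi_decay n (\<delta> / 2) (ln (p \<bullet> p))"
  proof (rule weighted_comparison_annulus[OF \<delta> zero_less_one U(1) _ u
        phi_decay_has_real_derivative[OF n, unfolded n_def]
        phi_decay'_has_real_derivative[OF n, unfolded n_def]
        radial_op_phi_decay_neg[OF n half, unfolded n_def] \<epsilon> _ M(1) _ p R(2), folded n_def])
    show "{y. 1 \<le> norm y \<and> norm y \<le> R} \<subseteq> U"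
      using U(2) by auto
    show "wgt \<delta> y * \<bar>lap u y - Xop u y\<bar> \<le> b" if "1 \<le> norm y" "norm y \<le> R" for y
      using L that by simp
    fix y :: "complex^'n"
    assume y: "norm y = 1 \<or> norm y = R"
    then have "y \<noteq> 0" "1 \<le> norm y"
      using R by auto
    have M_nonneg: "0 \<le> M * phi_decay n \<delta> (ln (y \<bullet> y))"
      and \<epsilon>_nonneg: "0 \<le> \<epsilon> * phi_decay n (\<delta> / 2) (ln (y \<bullet> y))"
      using M(2) \<epsilon> phi_decay_pos[of n] by (simp_all add: less_imp_le)
    from y show "u y \<le> M * phi_decay n \<delta> (ln (y \<bullet> y)) + \<epsilon> * phi_decay n (\<delta> / 2) (ln (y \<bullet> y))"
    proof
      assume "norm y = 1"
      then have "u y \<le> M * phi_decay n \<delta> (ln (y \<bullet> y))"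
        using inner[OF \<open>norm y = 1\<close>] \<open>y \<noteq> 0\<close> by (simp add: wgt_mult_le_iff n_def)
      then show ?thesis
        using \<epsilon>_nonneg by linarith
    next
      assume "norm y = R"
      have "u y \<le> B * phi_decay n \<delta> (ln (y \<bullet> y))"
        using bounded[OF \<open>1 \<le> norm y\<close>] \<open>y \<noteq> 0\<close> by (simp add: wgt_mult_le_iff n_def)
      also have "\<dots> \<le> \<epsilon> * phi_decay n (\<delta> / 2) (ln (y \<bullet> y))"
        using T \<open>T \<le> ln (R\<^sup>2)\<close> \<open>norm y = R\<close> by (simp add: power2_norm_eq_inner[symmetric])
      finally show ?thesis
        using M_nonneg by linarith
    qed
  qed
  then show ?thesis
    by (simp add: n_def)
qed

lemma weighted_upper_bound_exterior:
  fixes u :: "complex^'n::finite \<Rightarrow> real"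
  assumes \<delta>: "0 < \<delta>" "\<delta> < 1"
    and U: "open U" "{y. 1 \<le> norm y} \<subseteq> U" and u: "twice_differentiable_on U u"
    and inner: "\<And>y. norm y = 1 \<Longrightarrow> wgt \<delta> y * u y \<le> M"
    and bounded: "\<And>y. 1 \<le> norm y \<Longrightarrow> wgt \<delta> y * u y \<le> B"
    and L: "\<And>y. 1 \<le> norm y \<Longrightarrow> wgt \<delta> y * \<bar>lap u y - Xop u y\<bar> \<le> b"
    and M: "b / (4 * \<delta> * (1 - \<delta>) * real CARD('n)) \<le> M" "0 \<le> M"
    and p: "1 \<le> norm p"
  shows "wgt \<delta> p * u p \<le> M"
proof -
  have "u p \<le> M * phi_decay CARD('n) \<delta> (ln (p \<bullet> p))"
    using weighted_comparison_exterior[OF assms(1-10) _ p] by (rule le_of_forall_pos_le_add_mult)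
  moreover have "p \<noteq> 0"
    using p by auto
  ultimately show ?thesis
    by (simp add: wgt_mult_le_iff)
qed

lemma esup_le_max_scaled:
  fixes f g h :: "'a \<Rightarrow> real"
  assumes ne: "S1 \<noteq> {}" "S2 \<noteq> {}" and K: "0 < K"
    and nonneg: "\<And>z. z \<in> S1 \<Longrightarrow> 0 \<le> f z" "\<And>z. z \<in> S2 \<Longrightarrow> 0 \<le> g z"
    and bound: "\<And>a b z. 0 \<le> a \<Longrightarrow> 0 \<le> b \<Longrightarrow> (\<And>z. z \<in> S1 \<Longrightarrow> f z \<le> a) \<Longrightarrow>
      (\<And>z. z \<in> S2 \<Longrightarrow> g z \<le> b) \<Longrightarrow> z \<in> S \<Longrightarrow> h z \<le> max a (K * b)"
  shows "esup S h \<le> max (esup S1 f) (ereal K * esup S2 g)"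
proof (cases "esup S1 f = \<infinity> \<or> esup S2 g = \<infinity>")
  case True
  then show ?thesis
    using K by auto
next
  case False
  obtain z1 z2 where z: "z1 \<in> S1" "z2 \<in> S2"
    using ne by auto
  have fu: "ereal (f z) \<le> esup S1 f" if "z \<in> S1" for z
    unfolding esup_def using that by (rule SUP_upper)
  have gu: "ereal (g z) \<le> esup S2 g" if "z \<in> S2" for z
    unfolding esup_def using that by (rule SUP_upper)
  obtain a b where ab: "esup S1 f = ereal a" "esup S2 g = ereal b"
    using False fu[OF z(1)] gu[OF z(2)] by (cases "esup S1 f"; cases "esup S2 g") auto
  have "0 \<le> a" "0 \<le> b"
    using fu[OF z(1)] gu[OF z(2)] nonneg z ab by force+
  then have "h z \<le> max a (K * b)" if "z \<in> S" for z
    using bound fu gu ab that by auto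
  then have "esup S h \<le> ereal (max a (K * b))"
    unfolding esup_def by (intro SUP_least) (simp only: ereal_less_eq(3))
  then show ?thesis
    by (simp add: ab)
qed

lemma mult_abs_le_iff:
  fixes w x M :: real
  assumes "0 \<le> w"
  shows "w * \<bar>x\<bar> \<le> M \<longleftrightarrow> w * x \<le> M \<and> w * - x \<le> M"
proof -
  have "w * \<bar>x\<bar> = \<bar>w * x\<bar>"
    using assms by (simp add: abs_mult)
  then show ?thesis
    by (simp add: abs_le_iff)
qed

lemma weighted_esup_bound:
  fixes u :: "complex^'n::finite \<Rightarrow> real"
  assumes \<delta>: "0 < \<delta>" "\<delta> < 1" and ne: "S1 \<noteq> {}" "S \<noteq> {}"
    and bound: "\<And>M b z. b / (4 * \<delta> * (1 - \<delta>) * real CARD('n)) \<le> M \<Longrightarrow> 0 \<le> M \<Longrightarrow>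
      (\<And>y. y \<in> S1 \<Longrightarrow> wgt \<delta> y * \<bar>u y\<bar> \<le> M) \<Longrightarrow>
      (\<And>y. y \<in> S \<Longrightarrow> wgt \<delta> y * \<bar>lap u y - Xop u y\<bar> \<le> b) \<Longrightarrow> z \<in> S \<Longrightarrow> wgt \<delta> z * \<bar>u z\<bar> \<le> M"
  shows "esup S (\<lambda>z. wgt \<delta> z * \<bar>u z\<bar>)
      \<le> max (esup S1 (\<lambda>z. wgt \<delta> z * \<bar>u z\<bar>))
             (ereal (1 / (4 * \<delta> * (1 - \<delta>) * real CARD('n)))
               * esup S (\<lambda>z. wgt \<delta> z * \<bar>lap u z - Xop u z\<bar>))"
proof (rule esup_le_max_scaled[OF ne])
  fix a b and z :: "complex^'n"
  assume ab: "0 \<le> a" "0 \<le> b"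
    and a: "\<And>z. z \<in> S1 \<Longrightarrow> wgt \<delta> z * \<bar>u z\<bar> \<le> a"
    and b: "\<And>z. z \<in> S \<Longrightarrow> wgt \<delta> z * \<bar>lap u z - Xop u z\<bar> \<le> b"
    and z: "z \<in> S"
  let ?M = "max a (1 / (4 * \<delta> * (1 - \<delta>) * real CARD('n)) * b)"
  show "wgt \<delta> z * \<bar>u z\<bar> \<le> ?M"
  proof (rule bound[OF _ _ _ b z])
    show "b / (4 * \<delta> * (1 - \<delta>) * real CARD('n)) \<le> ?M" "0 \<le> ?M"
      using ab(1) by simp_all
    show "wgt \<delta> y * \<bar>u y\<bar> \<le> ?M" if "y \<in> S1" for y
      using a[OF that] by simp
  qed
next
  show "0 < 1 / (4 * \<delta> * (1 - \<delta>) * real CARD('n))"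
    using \<delta> by simp
qed (simp_all add: less_imp_le[OF wgt_pos])

lemma weighted_sup_bound_ball:
  fixes u :: "complex^'n::finite \<Rightarrow> real"
  assumes \<delta>: "0 < \<delta>" "\<delta> < 1" and u: "C2_on {z. (norm z)\<^sup>2 \<le> exp t0} u"
  shows "esup {z. (norm z)\<^sup>2 \<le> exp t0} (\<lambda>z. wgt \<delta> z * \<bar>u z\<bar>)
      \<le> max (esup {z. (norm z)\<^sup>2 = exp t0} (\<lambda>z. wgt \<delta> z * \<bar>u z\<bar>))
             (ereal (1 / (4 * \<delta> * (1 - \<delta>) * real CARD('n)))
               * esup {z. (norm z)\<^sup>2 \<le> exp t0} (\<lambda>z. wgt \<delta> z * \<bar>lap u z - Xop u z\<bar>))"
proof -
  define R where "R = exp (t0 / 2)"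
  have R: "0 < R"
    by (simp add: R_def)
  have R2: "exp t0 = R\<^sup>2"
    by (simp add: R_def power2_eq_square flip: exp_add)
  have "(norm z)\<^sup>2 \<le> exp t0 \<longleftrightarrow> norm z \<le> R" "(norm z)\<^sup>2 = exp t0 \<longleftrightarrow> norm z = R"
    for z :: "complex^'n"
    unfolding R2 using R by (simp_all add: power2_le_iff_abs_le power2_eq_iff_nonneg)
  then have ball: "{z::complex^'n. (norm z)\<^sup>2 \<le> exp t0} = cball 0 R"
    and sphere: "{z::complex^'n. (norm z)\<^sup>2 = exp t0} = {z. norm z = R}"
    by auto
  obtain U where U: "open U" "cball 0 R \<subseteq> U" and u': "twice_differentiable_on U u"
    using C2_on_imp_twice_differentiable_on[OF u] unfolding ball by blast
  obtain y :: "complex^'n" where "norm y = R"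
    using R by (meson less_imp_le vector_choose_size)
  then have "{z::complex^'n. norm z = R} \<noteq> {}" "cball (0::complex^'n) R \<noteq> {}"
    using R by auto
  then show ?thesis
    unfolding ball sphere
  proof (rule weighted_esup_bound[OF \<delta>])
    fix M b and z :: "complex^'n"
    assume M: "b / (4 * \<delta> * (1 - \<delta>) * real CARD('n)) \<le> M" "0 \<le> M"
      and sphere_bound: "\<And>y. y \<in> {z. norm z = R} \<Longrightarrow> wgt \<delta> y * \<bar>u y\<bar> \<le> M"
      and b: "\<And>y. y \<in> cball 0 R \<Longrightarrow> wgt \<delta> y * \<bar>lap u y - Xop u y\<bar> \<le> b"
      and z: "z \<in> cball 0 R"
    have L: "wgt \<delta> y * \<bar>lap u y - Xop u y\<bar> \<le> b"
      and L_minus: "wgt \<delta> y * \<bar>lap (\<lambda>y. - u y) y - Xop (\<lambda>y. - u y) y\<bar> \<le> b" if "norm y \<le> R" for y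
      using b[of y] U(2) that by (simp_all add: abs_lap_minus_Xop_minus[OF U(1) u' subsetD])
    have bd: "wgt \<delta> y * u y \<le> M" "wgt \<delta> y * - u y \<le> M" if "norm y = R" for y
      using sphere_bound[of y] that by (simp_all add: mult_abs_le_iff[OF less_imp_le[OF wgt_pos]])
    have "norm z \<le> R"
      using z by simp
    have "wgt \<delta> z * u z \<le> M"
      by (rule weighted_upper_bound_ball[OF \<delta> R U(1,2) u' bd(1) L M \<open>norm z \<le> R\<close>])
    moreover have "wgt \<delta> z * - u z \<le> M"
      by (rule weighted_upper_bound_ball[OF \<delta> R U(1,2) twice_differentiable_on_minus[OF U(1) u']
            bd(2) L_minus M \<open>norm z \<le> R\<close>])
    ultimately show "wgt \<delta> z * \<bar>u z\<bar> \<le> M"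
      by (simp add: mult_abs_le_iff[OF less_imp_le[OF wgt_pos]])
  qed
qed

lemma weighted_sup_bound_annulus:
  fixes u :: "complex^'n::finite \<Rightarrow> real"
  assumes \<delta>: "0 < \<delta>" "\<delta> < 1" and r0: "1 \<le> r0"
    and u: "C2_on {z. 1 \<le> norm z \<and> norm z \<le> r0} u" and outer: "\<And>z. norm z = r0 \<Longrightarrow> u z = 0"
  shows "esup {z. 1 \<le> norm z \<and> norm z \<le> r0} (\<lambda>z. wgt \<delta> z * \<bar>u z\<bar>)
      \<le> max (esup {z. norm z = 1} (\<lambda>z. wgt \<delta> z * \<bar>u z\<bar>))
             (ereal (1 / (4 * \<delta> * (1 - \<delta>) * real CARD('n)))
               * esup {z. 1 \<le> norm z \<and> norm z \<le> r0} (\<lambda>z. wgt \<delta> z * \<bar>lap u z - Xop u z\<bar>))"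
proof -
  obtain U where U: "open U" "{z. 1 \<le> norm z \<and> norm z \<le> r0} \<subseteq> U"
    and u': "twice_differentiable_on U u"
    using C2_on_imp_twice_differentiable_on[OF u] by blast
  obtain y :: "complex^'n" where "norm y = 1"
    by (meson zero_le_one vector_choose_size)
  then have "y \<in> {z. norm z = 1}" "y \<in> {z. 1 \<le> norm z \<and> norm z \<le> r0}"
    using r0 by auto
  then have "{z::complex^'n. norm z = 1} \<noteq> {}" "{z::complex^'n. 1 \<le> norm z \<and> norm z \<le> r0} \<noteq> {}"
    by blast+
  then show ?thesis
  proof (rule weighted_esup_bound[OF \<delta>])
    fix M b and z :: "complex^'n"
    assume M: "b / (4 * \<delta> * (1 - \<delta>) * real CARD('n)) \<le> M" "0 \<le> M"
      and sphere_bound: "\<And>y. y \<in> {z. norm z = 1} \<Longrightarrow> wgt \<delta> y * \<bar>u y\<bar> \<le> M"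
      and b: "\<And>y. y \<in> {z. 1 \<le> norm z \<and> norm z \<le> r0} \<Longrightarrow> wgt \<delta> y * \<bar>lap u y - Xop u y\<bar> \<le> b"
      and z: "z \<in> {z. 1 \<le> norm z \<and> norm z \<le> r0}"
    have L: "wgt \<delta> y * \<bar>lap u y - Xop u y\<bar> \<le> b"
      and L_minus: "wgt \<delta> y * \<bar>lap (\<lambda>y. - u y) y - Xop (\<lambda>y. - u y) y\<bar> \<le> b"
      if "1 \<le> norm y" "norm y \<le> r0" for y
      using b[of y] U(2) that by (simp_all add: abs_lap_minus_Xop_minus[OF U(1) u' subsetD])
    have bd: "wgt \<delta> y * u y \<le> M" "wgt \<delta> y * - u y \<le> M" if "norm y = 1" for y
      using sphere_bound[of y] that by (simp_all add: mult_abs_le_iff[OF less_imp_le[OF wgt_pos]])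
    have outer': "- u y = 0" if "norm y = r0" for y
      using outer[OF that] by simp
    have z': "1 \<le> norm z" "norm z \<le> r0"
      using z by simp_all
    have "wgt \<delta> z * u z \<le> M"
      by (rule weighted_upper_bound_annulus[OF \<delta> r0 U u' bd(1) outer L M z'])
    moreover have "wgt \<delta> z * - u z \<le> M"
      by (rule weighted_upper_bound_annulus[OF \<delta> r0 U twice_differentiable_on_minus[OF U(1) u']
            bd(2) outer' L_minus M z'])
    ultimately show "wgt \<delta> z * \<bar>u z\<bar> \<le> M"
      by (simp add: mult_abs_le_iff[OF less_imp_le[OF wgt_pos]])
  qed
qed

lemma weighted_sup_bound_exterior:
  fixes u :: "complex^'n::finite \<Rightarrow> real"
  assumes \<delta>: "0 < \<delta>" "\<delta> < 1" and u: "C2_delta \<delta> {z. 1 \<le> norm z} u"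
  shows "esup {z. 1 \<le> norm z} (\<lambda>z. wgt \<delta> z * \<bar>u z\<bar>)
      \<le> max (esup {z. norm z = 1} (\<lambda>z. wgt \<delta> z * \<bar>u z\<bar>))
             (ereal (1 / (4 * \<delta> * (1 - \<delta>) * real CARD('n)))
               * esup {z. 1 \<le> norm z} (\<lambda>z. wgt \<delta> z * \<bar>lap u z - Xop u z\<bar>))"
proof -
  obtain U where U: "open U" "{z. 1 \<le> norm z} \<subseteq> U" and u': "twice_differentiable_on U u"
    using u C2_on_imp_twice_differentiable_on unfolding C2_delta_def by blast
  obtain B where B: "\<And>z. 1 \<le> norm z \<Longrightarrow> \<bar>wgt \<delta> z * u z\<bar> \<le> B"
    using u unfolding C2_delta_def C2_bounded_def by auto
  obtain y :: "complex^'n" where "norm y = 1"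
    by (meson zero_le_one vector_choose_size)
  then have "y \<in> {z. norm z = 1}" "y \<in> {z. 1 \<le> norm z}"
    by auto
  then have "{z::complex^'n. norm z = 1} \<noteq> {}" "{z::complex^'n. 1 \<le> norm z} \<noteq> {}"
    by blast+
  then show ?thesis
  proof (rule weighted_esup_bound[OF \<delta>])
    fix M b and z :: "complex^'n"
    assume M: "b / (4 * \<delta> * (1 - \<delta>) * real CARD('n)) \<le> M" "0 \<le> M"
      and sphere_bound: "\<And>y. y \<in> {z. norm z = 1} \<Longrightarrow> wgt \<delta> y * \<bar>u y\<bar> \<le> M"
      and b: "\<And>y. y \<in> {z. 1 \<le> norm z} \<Longrightarrow> wgt \<delta> y * \<bar>lap u y - Xop u y\<bar> \<le> b"
      and z: "z \<in> {z. 1 \<le> norm z}"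
    have L: "wgt \<delta> y * \<bar>lap u y - Xop u y\<bar> \<le> b"
      and L_minus: "wgt \<delta> y * \<bar>lap (\<lambda>y. - u y) y - Xop (\<lambda>y. - u y) y\<bar> \<le> b"
      if "1 \<le> norm y" for y
      using b[of y] U(2) that by (simp_all add: abs_lap_minus_Xop_minus[OF U(1) u' subsetD])
    have bd: "wgt \<delta> y * u y \<le> M" "wgt \<delta> y * - u y \<le> M" if "norm y = 1" for y
      using sphere_bound[of y] that by (simp_all add: mult_abs_le_iff[OF less_imp_le[OF wgt_pos]])
    have B': "wgt \<delta> y * u y \<le> B" "wgt \<delta> y * - u y \<le> B" if "1 \<le> norm y" for y
      using B[OF that] by (simp_all add: abs_le_iff)
    have "1 \<le> norm z"
      using z by simp
    have "wgt \<delta> z * u z \<le> M"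
      by (rule weighted_upper_bound_exterior[OF \<delta> U u' bd(1) B'(1) L M \<open>1 \<le> norm z\<close>])
    moreover have "wgt \<delta> z * - u z \<le> M"
      by (rule weighted_upper_bound_exterior[OF \<delta> U twice_differentiable_on_minus[OF U(1) u']
            bd(2) B'(2) L_minus M \<open>1 \<le> norm z\<close>])
    ultimately show "wgt \<delta> z * \<bar>u z\<bar> \<le> M"
      by (simp add: mult_abs_le_iff[OF less_imp_le[OF wgt_pos]])
  qed
qed

theorem lemma4p2:
  fixes \<delta> :: real
  assumes "0 < \<delta>" and "\<delta> < 1"
  defines "K \<equiv> ereal (1 / (4 * \<delta> * (1 - \<delta>) * real CARD('n)))"
  shows
    "(\<forall>(t0::real) (u :: complex^'n::finite \<Rightarrow> real).
        C2_on {z. (norm z)\<^sup>2 \<le> exp t0} u \<longrightarrow>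
        esup {z. (norm z)\<^sup>2 \<le> exp t0} (\<lambda>z. wgt \<delta> z * \<bar>u z\<bar>)
          \<le> max (esup {z. (norm z)\<^sup>2 = exp t0} (\<lambda>z. wgt \<delta> z * \<bar>u z\<bar>))
                 (K * esup {z. (norm z)\<^sup>2 \<le> exp t0} (\<lambda>z. wgt \<delta> z * \<bar>lap u z - Xop u z\<bar>)))
     \<and>
     (\<forall>(r0::real) (u :: complex^'n \<Rightarrow> real).
        1 \<le> r0 \<longrightarrow> C2_on {z. 1 \<le> norm z \<and> norm z \<le> r0} u \<longrightarrow>
        (\<forall>z. norm z = r0 \<longrightarrow> u z = 0) \<longrightarrow>
        esup {z. 1 \<le> norm z \<and> norm z \<le> r0} (\<lambda>z. wgt \<delta> z * \<bar>u z\<bar>)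
          \<le> max (esup {z. norm z = 1} (\<lambda>z. wgt \<delta> z * \<bar>u z\<bar>))
                 (K * esup {z. 1 \<le> norm z \<and> norm z \<le> r0} (\<lambda>z. wgt \<delta> z * \<bar>lap u z - Xop u z\<bar>)))
     \<and>
     (\<forall>(u :: complex^'n \<Rightarrow> real).
        C2_delta \<delta> {z. 1 \<le> norm z} u \<longrightarrow>
        esup {z. 1 \<le> norm z} (\<lambda>z. wgt \<delta> z * \<bar>u z\<bar>)
          \<le> max (esup {z. norm z = 1} (\<lambda>z. wgt \<delta> z * \<bar>u z\<bar>))
                 (K * esup {z. 1 \<le> norm z} (\<lambda>z. wgt \<delta> z * \<bar>lap u z - Xop u z\<bar>)))"
  unfolding K_def
  using weighted_sup_bound_ball[OF assms(1,2)] weighted_sup_bound_annulus[OF assms(1,2)]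
    weighted_sup_bound_exterior[OF assms(1,2)]
  by blast

end
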